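(* Let $\Omega\subset\mathbb{R}^n$ ($n=2,3$) be a bounded, simply connected Lipschitz domain, and let $\mathbb{U}\subset H^1_D(\Omega)$ and $\mathbb{Q}_c\subset H^1_P(\Omega)$ be closed subspaces. Let $\mu,\lambda,\kappa,\xi>0$ and define $a^I(\mathbf{u},\boldsymbol{\phi})=(2\mu\epsilon(\mathbf{u}),\epsilon(\boldsymbol{\phi}))+(\lambda\nabla\cdot\mathbf{u},\nabla\cdot\boldsymbol{\phi})$, $b^I(\mathbf{u},p)=(\nabla\cdot\mathbf{u},p)$, $d^I(p,q)=(\kappa^{-1}\nabla p,\nabla q)+(\xi p,q)$. Assume the inf-sup condition: there is a constant $\gamma>0$ independent of $\mu,\lambda,\kappa,\xi$ and of the discretization such that for all $p\in(\mathbb{K}^I)^{\perp}$, $\sup_{\mathbf{u}\in\mathbb{U}}\frac{b^I(\mathbf{u},p)}{\|\mathbf{u}\|_1}\ge\gamma\|p\|_0$, where $\mathbb{K}^I=\{p\in\mathbb{Q}_c: b^I(\boldsymbol{\phi},p)=0\ \forall\boldsymbol{\phi}\in\mathbb{U}\}$. Let $\beta=\max\{\mu,\lambda\}$ and define the norms $\|\mathbf{u}\|_{\mathbb{U}}^2=a^I(\mathbf{u},\mathbf{u})$ and $\|q\|_{\mathbb{Q}_c}^2=\beta^{-1}\|q\|_0^2+d^I(q,q)$. Then the problem: find $(\mathbf{u},p)\in\mathbb{U}\times\mathbb{Q}_c$ with $a^I(\mathbf{u},\boldsymbol{\phi})+b^I(\boldsymbol{\phi},p)=(f,\boldsymbol{\phi})$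 and $b^I(\mathbf{u},q)-d^I(p,q)=(g,q)$ for all $(\boldsymbol{\phi},q)\in\mathbb{U}\times\mathbb{Q}_c$, is uniformly well-posed with respect to the parameters under the norms $\|\cdot\|_{\mathbb{U}}$ and $\|\cdot\|_{\mathbb{Q}_c}$.
   Context: $\partial\Omega=\bar\Gamma_{D,u}\cup\bar\Gamma_{N,u}$ with $\Gamma_{D,u}\cap\Gamma_{N,u}=\emptyset$, and $\partial\Omega=\bar\Gamma_{D,v}\cup\bar\Gamma_{N,v}$ with $\Gamma_{D,v}\cap\Gamma_{N,v}=\emptyset$. $H^1_D(\Omega)=\{\mathbf{u}\in (H^1(\Omega))^n:\mathbf{u}=0 \text{ on }\Gamma_{D,u}\}$, $H^1_P(\Omega)=\{p\in H^1(\Omega): p=0\text{ on }\Gamma_{N,v}\}$. $\epsilon(\mathbf{u})=(\nabla\mathbf{u}+\nabla\mathbf{u}^T)/2$; $(\cdot,\cdot)$ and $\|\cdot\|_0$ are the $L^2(\Omega)$ inner product and norm, $\|\cdot\|_1$ the $H^1$ norm. Standing assumptions of the paper: $|\Gamma_{D,u}|>0$ and $|\Gamma_{N,u}|>0$, and (as the paper asserts follows from $|\Gamma_{N,u}|>0$) the kernel $\mathbb{K}^I$ is $\{0\}$. "Uniformly well-posed with respect to parameters under norms $\|\cdot\|_{\mathbb{M}},\|\cdot\|_{\mathbb{N}}$" means: the bilinear form $L(\mathbf{u},p;\boldsymbol{\phi},q)$ given by the left-hand side of the system is bounded on $(\mathbb{M}\times\mathbb{N})^2$ with respect to the product norm $(\|\cdot\|_{\mathbb{M}}^2+\|\cdot\|_{\mathbb{N}}^2)^{1/2}$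 and satisfies $\inf_{(\mathbf{u},p)}\sup_{(\boldsymbol{\phi},q)}\frac{L(\mathbf{u},p;\boldsymbol{\phi},q)}{\|(\mathbf{u},p)\|\,\|(\boldsymbol{\phi},q)\|}\ge c>0$, with both the boundedness constant and $c$ independent of $\mu,\lambda,\kappa,\xi$ (and of the discretization). *)

theory Defs
  imports "HOL-Analysis.Analysis"
begin

definition pdiff :: "(real^'n \<Rightarrow> real) \<Rightarrow> 'n \<Rightarrow> real^'n \<Rightarrow> real" where
  "pdiff f i x = frechet_derivative f (at x) (axis i 1)"

fun iter_pdiff :: "(real^'n \<Rightarrow> real) \<Rightarrow> 'n list \<Rightarrow> real^'n \<Rightarrow> real" where
  "iter_pdiff f [] = f"
| "iter_pdiff f (i # is) = pdiff (iter_pdiff f is) i"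

text \<open>C^infinity on all of R^n: every iterated partial derivative is Frechet
  differentiable everywhere (hence all derivatives exist and are continuous).\<close>
definition smooth_fun :: "(real^'n \<Rightarrow> real) \<Rightarrow> bool" where
  "smooth_fun f \<longleftrightarrow> (\<forall>is x. iter_pdiff f is differentiable (at x))"

definition tsupport :: "(real^'n \<Rightarrow> real) \<Rightarrow> (real^'n) set" where
  "tsupport f = closure {x. f x \<noteq> 0}"

definition test_fun :: "(real^'n) set \<Rightarrow> (real^'n \<Rightarrow> real) \<Rightarrow> bool" where
  "test_fun \<Omega> \<phi> \<longleftrightarrow> smooth_fun \<phi> \<and> compact (tsupport \<phi>) \<and> tsupport \<phi> \<subseteq> \<Omega>"

definition L2 :: "(real^'n) set \<Rightarrow> (real^'n \<Rightarrow> real) \<Rightarrow> bool" where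
  "L2 \<Omega> f \<longleftrightarrow> set_borel_measurable lebesgue \<Omega> f \<and>
                 set_integrable lebesgue \<Omega> (\<lambda>x. (f x)^2)"

definition L2inner :: "(real^'n) set \<Rightarrow> (real^'n \<Rightarrow> real) \<Rightarrow> (real^'n \<Rightarrow> real) \<Rightarrow> real" where
  "L2inner \<Omega> f g = (LINT x:\<Omega>|lebesgue. f x * g x)"

definition L2norm :: "(real^'n) set \<Rightarrow> (real^'n \<Rightarrow> real) \<Rightarrow> real" where
  "L2norm \<Omega> f = sqrt (L2inner \<Omega> f f)"

definition weak_partial :: "(real^'n) set \<Rightarrow> (real^'n \<Rightarrow> real) \<Rightarrow> 'n \<Rightarrow> (real^'n \<Rightarrow> real) \<Rightarrow> bool" where
  "weak_partial \<Omega> f i g \<longleftrightarrow>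
     (\<forall>\<phi>. test_fun \<Omega> \<phi> \<longrightarrow>
        (LINT x:\<Omega>|lebesgue. f x * pdiff \<phi> i x) = - (LINT x:\<Omega>|lebesgue. g x * \<phi> x))"

definition H1 :: "(real^'n) set \<Rightarrow> (real^'n \<Rightarrow> real) \<Rightarrow> bool" where
  "H1 \<Omega> f \<longleftrightarrow> L2 \<Omega> f \<and> (\<forall>i. \<exists>g. L2 \<Omega> g \<and> weak_partial \<Omega> f i g)"

text \<open>The weak partial derivative (unique up to null sets, so all integrals below are well defined).\<close>
definition wpd :: "(real^'n) set \<Rightarrow> (real^'n \<Rightarrow> real) \<Rightarrow> 'n \<Rightarrow> real^'n \<Rightarrow> real" where
  "wpd \<Omega> f i = (SOME g. L2 \<Omega> g \<and> weak_partial \<Omega> f i g)"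

definition H1norm :: "(real^'n) set \<Rightarrow> (real^'n \<Rightarrow> real) \<Rightarrow> real" where
  "H1norm \<Omega> f = sqrt ((L2norm \<Omega> f)^2 + (\<Sum>i\<in>UNIV. (L2norm \<Omega> (wpd \<Omega> f i))^2))"

definition H1v :: "(real^'n) set \<Rightarrow> (real^'n \<Rightarrow> real^'n) \<Rightarrow> bool" where
  "H1v \<Omega> u \<longleftrightarrow> (\<forall>j. H1 \<Omega> (\<lambda>x. u x $ j))"

definition H1vnorm :: "(real^'n) set \<Rightarrow> (real^'n \<Rightarrow> real^'n) \<Rightarrow> real" where
  "H1vnorm \<Omega> u = sqrt (\<Sum>j\<in>UNIV. (H1norm \<Omega> (\<lambda>x. u x $ j))^2)"

text \<open>Weak gradient entry (grad u)_{j i} = d u_j / d x_i, strain and divergence.\<close>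
definition vgrad :: "(real^'n) set \<Rightarrow> (real^'n \<Rightarrow> real^'n) \<Rightarrow> 'n \<Rightarrow> 'n \<Rightarrow> real^'n \<Rightarrow> real" where
  "vgrad \<Omega> u j i = wpd \<Omega> (\<lambda>x. u x $ j) i"

definition strain :: "(real^'n) set \<Rightarrow> (real^'n \<Rightarrow> real^'n) \<Rightarrow> 'n \<Rightarrow> 'n \<Rightarrow> real^'n \<Rightarrow> real" where
  "strain \<Omega> u j i = (\<lambda>x. (vgrad \<Omega> u j i x + vgrad \<Omega> u i j x) / 2)"

definition wdiv :: "(real^'n) set \<Rightarrow> (real^'n \<Rightarrow> real^'n) \<Rightarrow> real^'n \<Rightarrow> real" where
  "wdiv \<Omega> u = (\<lambda>x. \<Sum>j\<in>UNIV. vgrad \<Omega> u j j x)"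

text \<open>f in H^1(Omega) has zero trace on Gamma: f is the H^1(Omega)-limit of functions
  smooth on R^n that vanish in a neighbourhood of Gamma.\<close>
definition H1_zero_on :: "(real^'n) set \<Rightarrow> (real^'n) set \<Rightarrow> (real^'n \<Rightarrow> real) \<Rightarrow> bool" where
  "H1_zero_on \<Omega> \<Gamma> f \<longleftrightarrow> H1 \<Omega> f \<and>
     (\<exists>\<phi> :: nat \<Rightarrow> real^'n \<Rightarrow> real.
        (\<forall>k. smooth_fun (\<phi> k) \<and> (\<exists>V. open V \<and> \<Gamma> \<subseteq> V \<and> (\<forall>x\<in>V. \<phi> k x = 0))) \<and>
        (\<lambda>k. H1norm \<Omega> (\<lambda>x. \<phi> k x - f x)) \<longlonglongrightarrow> 0)"

definition H1_D :: "(real^'n) set \<Rightarrow> (real^'n) set \<Rightarrow> (real^'n \<Rightarrow> real^'n) set" where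
  "H1_D \<Omega> \<Gamma>Du = {u. \<forall>j. H1_zero_on \<Omega> \<Gamma>Du (\<lambda>x. u x $ j)}"

definition H1_P :: "(real^'n) set \<Rightarrow> (real^'n) set \<Rightarrow> (real^'n \<Rightarrow> real) set" where
  "H1_P \<Omega> \<Gamma>Nv = {p. H1_zero_on \<Omega> \<Gamma>Nv p}"

definition closed_subspace_v :: "(real^'n) set \<Rightarrow> (real^'n \<Rightarrow> real^'n) set \<Rightarrow> (real^'n \<Rightarrow> real^'n) set \<Rightarrow> bool" where
  "closed_subspace_v \<Omega> X U \<longleftrightarrow> U \<subseteq> X \<and> (\<lambda>x. 0) \<in> U \<and>
     (\<forall>u\<in>U. \<forall>v\<in>U. (\<lambda>x. u x + v x) \<in> U) \<and> (\<forall>c. \<forall>u\<in>U. (\<lambda>x. c *\<^sub>R u x) \<in> U) \<and>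
     (\<forall>s u. (\<forall>k. s k \<in> U) \<longrightarrow> u \<in> X \<longrightarrow>
        (\<lambda>k. H1vnorm \<Omega> (\<lambda>x. s k x - u x)) \<longlonglongrightarrow> 0 \<longrightarrow> u \<in> U)"

definition closed_subspace_s :: "(real^'n) set \<Rightarrow> (real^'n \<Rightarrow> real) set \<Rightarrow> (real^'n \<Rightarrow> real) set \<Rightarrow> bool" where
  "closed_subspace_s \<Omega> X Q \<longleftrightarrow> Q \<subseteq> X \<and> (\<lambda>x. 0) \<in> Q \<and>
     (\<forall>p\<in>Q. \<forall>q\<in>Q. (\<lambda>x. p x + q x) \<in> Q) \<and> (\<forall>c. \<forall>p\<in>Q. (\<lambda>x. c * p x) \<in> Q) \<and>
     (\<forall>s p. (\<forall>k. s k \<in> Q) \<longrightarrow> p \<in> X \<longrightarrow>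
        (\<lambda>k. H1norm \<Omega> (\<lambda>x. s k x - p x)) \<longlonglongrightarrow> 0 \<longrightarrow> p \<in> Q)"

text \<open>Bounded open set whose boundary is locally, after an orthogonal change of
  coordinates, the graph of a Lipschitz function of the remaining n-1 coordinates
  (with the domain on one side).\<close>
definition lipschitz_domain :: "(real^'n) set \<Rightarrow> bool" where
  "lipschitz_domain \<Omega> \<longleftrightarrow> open \<Omega> \<and> bounded \<Omega> \<and>
     (\<forall>x\<in>frontier \<Omega>. \<exists>(R::real^'n \<Rightarrow> real^'n) (r::real) (h::real^'n \<Rightarrow> real) (L::real) (k::'n).
        orthogonal_transformation R \<and> 0 < r \<and>
        (\<forall>y z. (\<forall>i. i \<noteq> k \<longrightarrow> y $ i = z $ i) \<longrightarrow> h y = h z) \<and>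
        L-lipschitz_on UNIV h \<and>
        \<Omega> \<inter> ball x r = {y \<in> ball x r. h (R y) < R y $ k})"

definition aI :: "(real^'n) set \<Rightarrow> real \<Rightarrow> real \<Rightarrow> (real^'n \<Rightarrow> real^'n) \<Rightarrow> (real^'n \<Rightarrow> real^'n) \<Rightarrow> real" where
  "aI \<Omega> \<mu> lam u \<phi> =
     (\<Sum>j\<in>UNIV. \<Sum>i\<in>UNIV. L2inner \<Omega> (\<lambda>x. 2 * \<mu> * strain \<Omega> u j i x) (strain \<Omega> \<phi> j i))
     + L2inner \<Omega> (\<lambda>x. lam * wdiv \<Omega> u x) (wdiv \<Omega> \<phi>)"

definition bI :: "(real^'n) set \<Rightarrow> (real^'n \<Rightarrow> real^'n) \<Rightarrow> (real^'n \<Rightarrow> real) \<Rightarrow> real" where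
  "bI \<Omega> u p = L2inner \<Omega> (wdiv \<Omega> u) p"

definition dI :: "(real^'n) set \<Rightarrow> real \<Rightarrow> real \<Rightarrow> (real^'n \<Rightarrow> real) \<Rightarrow> (real^'n \<Rightarrow> real) \<Rightarrow> real" where
  "dI \<Omega> \<kappa> \<xi> p q =
     (\<Sum>i\<in>UNIV. L2inner \<Omega> (\<lambda>x. (1 / \<kappa>) * wpd \<Omega> p i x) (wpd \<Omega> q i))
     + L2inner \<Omega> (\<lambda>x. \<xi> * p x) q"

definition LI :: "(real^'n) set \<Rightarrow> real \<Rightarrow> real \<Rightarrow> real \<Rightarrow> real \<Rightarrow>
     (real^'n \<Rightarrow> real^'n) \<times> (real^'n \<Rightarrow> real) \<Rightarrow> (real^'n \<Rightarrow> real^'n) \<times> (real^'n \<Rightarrow> real) \<Rightarrow> real" where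
  "LI \<Omega> \<mu> lam \<kappa> \<xi> up \<phi>q =
     aI \<Omega> \<mu> lam (fst up) (fst \<phi>q) + bI \<Omega> (fst \<phi>q) (snd up)
     + bI \<Omega> (fst up) (snd \<phi>q) - dI \<Omega> \<kappa> \<xi> (snd up) (snd \<phi>q)"

definition prod_normI :: "(real^'n) set \<Rightarrow> real \<Rightarrow> real \<Rightarrow> real \<Rightarrow> real \<Rightarrow>
     (real^'n \<Rightarrow> real^'n) \<times> (real^'n \<Rightarrow> real) \<Rightarrow> real" where
  "prod_normI \<Omega> \<mu> lam \<kappa> \<xi> up =
     sqrt (aI \<Omega> \<mu> lam (fst up) (fst up)
           + (1 / max \<mu> lam) * (L2norm \<Omega> (snd up))^2 + dI \<Omega> \<kappa> \<xi> (snd up) (snd up))"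

text \<open>Uniform well-posedness with constants C (boundedness) and c (inf-sup).\<close>
definition well_posed_with :: "(real^'n) set \<Rightarrow> (real^'n \<Rightarrow> real^'n) set \<Rightarrow> (real^'n \<Rightarrow> real) set \<Rightarrow>
     real \<Rightarrow> real \<Rightarrow> real \<Rightarrow> real \<Rightarrow> real \<Rightarrow> real \<Rightarrow> bool" where
  "well_posed_with \<Omega> U Q \<mu> lam \<kappa> \<xi> C c \<longleftrightarrow>
     (\<forall>up\<in>U \<times> Q. \<forall>\<phi>q\<in>U \<times> Q.
        \<bar>LI \<Omega> \<mu> lam \<kappa> \<xi> up \<phi>q\<bar> \<le> C * prod_normI \<Omega> \<mu> lam \<kappa> \<xi> up * prod_normI \<Omega> \<mu> lam \<kappa> \<xi> \<phi>q) \<and>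
     (\<forall>up\<in>U \<times> Q. prod_normI \<Omega> \<mu> lam \<kappa> \<xi> up > 0 \<longrightarrow>
        (\<forall>t < c * prod_normI \<Omega> \<mu> lam \<kappa> \<xi> up. \<exists>\<phi>q\<in>U \<times> Q.
           prod_normI \<Omega> \<mu> lam \<kappa> \<xi> \<phi>q > 0 \<and>
           LI \<Omega> \<mu> lam \<kappa> \<xi> up \<phi>q > t * prod_normI \<Omega> \<mu> lam \<kappa> \<xi> \<phi>q))"

definition kerI :: "(real^'n) set \<Rightarrow> (real^'n \<Rightarrow> real^'n) set \<Rightarrow> (real^'n \<Rightarrow> real) set \<Rightarrow> (real^'n \<Rightarrow> real) set" where
  "kerI \<Omega> U Q = {p \<in> Q. \<forall>\<phi>\<in>U. bI \<Omega> \<phi> p = 0}"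

definition kerI_perp :: "(real^'n) set \<Rightarrow> (real^'n \<Rightarrow> real^'n) set \<Rightarrow> (real^'n \<Rightarrow> real) set \<Rightarrow> (real^'n \<Rightarrow> real) set" where
  "kerI_perp \<Omega> U Q = {p \<in> Q. \<forall>k\<in>kerI \<Omega> U Q. L2inner \<Omega> p k = 0}"

end

(* Boundedness: each term of L satisfies a weighted Cauchy-Schwarz inequality
   |B(x,y)| <= (t B(x,x) + B(y,y) / t) / 2 for all t > 0; for the coupling terms one uses
   max mu lambda * ||div phi||^2 <= n a(phi,phi).  Adding up and optimising over t gives C = n + 1.

   Inf-sup: let N = ||(u,p)||.  If a(u,u) + d(p,p) >= c N^2, test with (u,-p), which gives
   L = a(u,u) + d(p,p).  Otherwise ||p||^2 / beta carries at least half of N^2; the assumed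
   inf-sup condition, transferred to the energy norm by a(w,w) <= (2 + n) beta ||w||_1^2,
   yields w with b(w,p) large, and testing with (w,0) works because |a(u,w)| is small.

   The weak derivatives wpd are picked by Hilbert choice, so already d(p,-p) = -d(p,p) needs
   uniqueness of weak derivatives almost everywhere.  This is the fundamental lemma of the
   calculus of variations, proved with smooth bumps that converge to indicators of boxes. *)

theory Submission
  imports Defs "HOL-Computational_Algebra.Polynomial" "HOL-Real_Asymp.Real_Asymp"
begin

section \<open>Smooth functions of one real variable\<close>

definition differentiable_upto :: "nat \<Rightarrow> (real \<Rightarrow> real) \<Rightarrow> bool" where
  "differentiable_upto m g \<longleftrightarrow> (\<forall>j\<le>m. \<forall>t. (deriv ^^ j) g field_differentiable (at t))"

definition smooth_real :: "(real \<Rightarrow> real) \<Rightarrow> bool" where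
  "smooth_real g \<longleftrightarrow> (\<forall>m. differentiable_upto m g)"

lemma differentiable_upto_0: "differentiable_upto 0 g \<longleftrightarrow> (\<forall>t. g field_differentiable (at t))"
  by (simp add: differentiable_upto_def)

lemma differentiable_upto_Suc:
  "differentiable_upto (Suc m) g \<longleftrightarrow>
     (\<forall>t. g field_differentiable (at t)) \<and> differentiable_upto m (deriv g)"
proof -
  have "(\<forall>j\<le>Suc m. P j) \<longleftrightarrow> P 0 \<and> (\<forall>j\<le>m. P (Suc j))" for P :: "nat \<Rightarrow> bool"
    by (metis Suc_le_mono le0 not0_implies_Suc)
  then show ?thesis
    unfolding differentiable_upto_def by (simp add: funpow_Suc_right del: funpow.simps)
qed

lemma smooth_real_iff:
  "smooth_real g \<longleftrightarrow> (\<forall>t. g field_differentiable (at t)) \<and> smooth_real (deriv g)"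
proof
  assume "smooth_real g"
  then show "(\<forall>t. g field_differentiable (at t)) \<and> smooth_real (deriv g)"
    unfolding smooth_real_def using differentiable_upto_0 differentiable_upto_Suc by blast
next
  assume g: "(\<forall>t. g field_differentiable (at t)) \<and> smooth_real (deriv g)"
  show "smooth_real g"
    unfolding smooth_real_def
  proof
    fix m show "differentiable_upto m g"
      using g by (cases m) (simp_all add: differentiable_upto_0 differentiable_upto_Suc smooth_real_def)
  qed
qed

lemma smooth_real_has_field_derivative:
  "smooth_real g \<Longrightarrow> (g has_field_derivative deriv g t) (at t)"
  using smooth_real_iff DERIV_deriv_iff_field_differentiable by blast

lemma smooth_real_deriv: "smooth_real g \<Longrightarrow> smooth_real (deriv g)"
  using smooth_real_iff by blast

lemma differentiable_upto_add:
  "differentiable_upto m f \<Longrightarrow> differentiable_upto m g \<Longrightarrow> differentiable_upto m (\<lambda>t. f t + g t)"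
proof (induction m arbitrary: f g)
  case 0
  then show ?case by (simp add: differentiable_upto_0 field_differentiable_add)
next
  case (Suc m)
  then have "deriv (\<lambda>t. f t + g t) = (\<lambda>t. deriv f t + deriv g t)"
    by (auto simp: differentiable_upto_Suc intro!: ext)
  with Suc show ?case by (simp add: differentiable_upto_Suc field_differentiable_add)
qed

lemma smooth_real_mult: "smooth_real f \<Longrightarrow> smooth_real g \<Longrightarrow> smooth_real (\<lambda>t. f t * g t)"
  unfolding smooth_real_def[of "\<lambda>t. f t * g t"]
proof (intro allI)
  fix m show "smooth_real f \<Longrightarrow> smooth_real g \<Longrightarrow> differentiable_upto m (\<lambda>t. f t * g t)"
  proof (induction m arbitrary: f g)
    case 0
    then show ?case
      by (simp add: differentiable_upto_0 smooth_real_iff[of f] smooth_real_iff[of g]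
          field_differentiable_mult)
  next
    case (Suc m)
    have f: "\<And>t. f field_differentiable (at t)" "smooth_real (deriv f)"
      and g: "\<And>t. g field_differentiable (at t)" "smooth_real (deriv g)"
      using Suc.prems smooth_real_iff by blast+
    then have "deriv (\<lambda>t. f t * g t) = (\<lambda>t. deriv f t * g t + f t * deriv g t)"
      by (auto intro!: ext)
    then show ?case
      using Suc f g by (simp add: differentiable_upto_Suc field_differentiable_mult differentiable_upto_add)
  qed
qed

lemma has_field_derivative_compose_affine:
  assumes "(f has_field_derivative D) (at (a * t + b))"
  shows "((\<lambda>t. f (a * t + b)) has_field_derivative D * a) (at t)"
proof -
  have "((\<lambda>t. a * t + b) has_field_derivative a) (at t)"
    by (auto intro!: derivative_eq_intros)
  from DERIV_chain2[OF assms this] show ?thesis .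
qed

lemma smooth_real_compose_affine: "smooth_real g \<Longrightarrow> smooth_real (\<lambda>t. g (a * t + b))"
proof -
  \<comment> \<open>The factor \<open>c\<close> absorbs the chain-rule factor \<open>a\<close> of each differentiation.\<close>
  have "differentiable_upto m (\<lambda>t. c * g (a * t + b))" if "smooth_real g" for m c g
    using that
  proof (induction m arbitrary: c g)
    case (0 c g)
    show ?case
      using DERIV_cmult[OF has_field_derivative_compose_affine[OF smooth_real_has_field_derivative[OF 0]]]
      unfolding differentiable_upto_0 field_differentiable_def by blast
  next
    case (Suc m c g)
    have d: "((\<lambda>t. c * g (a * t + b)) has_field_derivative c * (deriv g (a * t + b) * a)) (at t)" for t
      by (rule DERIV_cmult[OF has_field_derivative_compose_affine[OF smooth_real_has_field_derivative[OF Suc.prems]]])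
    then have "deriv (\<lambda>t. c * g (a * t + b)) = (\<lambda>t. c * (deriv g (a * t + b) * a))"
      by (auto intro!: ext DERIV_imp_deriv)
    also have "\<dots> = (\<lambda>t. (c * a) * deriv g (a * t + b))"
      by (simp add: ac_simps)
    finally have "deriv (\<lambda>t. c * g (a * t + b)) = (\<lambda>t. (c * a) * deriv g (a * t + b))" .
    then show ?case
      using Suc.IH Suc.prems d smooth_real_deriv
      by (auto simp: differentiable_upto_Suc field_differentiable_def)
  qed
  from this[of g _ 1] show "smooth_real g \<Longrightarrow> ?thesis" by (simp add: smooth_real_def)
qed

definition flat_exp_poly :: "real poly \<Rightarrow> real \<Rightarrow> real" where
  "flat_exp_poly P t = (if t > 0 then poly P (1 / t) * exp (- (1 / t)) else 0)"

(* (P(1/t) exp(-1/t))' = Q(1/t) exp(-1/t) with Q(s) = s^2 (P(s) - P'(s)). *)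
definition flat_deriv_poly :: "real poly \<Rightarrow> real poly" where
  "flat_deriv_poly P = [:0, 0, 1:] * (P - pderiv P)"

definition flat_exp :: "real \<Rightarrow> real" where
  "flat_exp t = (if t > 0 then exp (- (1 / t)) else 0)"

lemma poly_over_exp_tendsto_0: "((\<lambda>s. poly P s / exp s) \<longlongrightarrow> 0) at_top"
  for P :: "real poly"
proof -
  have "((\<lambda>s. \<Sum>i\<le>degree P. coeff P i * (s ^ i / exp s)) \<longlongrightarrow> (\<Sum>i\<le>degree P. coeff P i * 0)) at_top"
    by (intro tendsto_sum tendsto_mult tendsto_const) (simp add: tendsto_power_div_exp_0)
  then show ?thesis
    by (simp add: poly_altdef sum_divide_distrib)
qed

lemma has_field_derivative_poly_inverse_exp:
  assumes "t > 0"
  shows "((\<lambda>t. poly P (1 / t) * exp (- (1 / t))) has_field_derivative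
           poly (flat_deriv_poly P) (1 / t) * exp (- (1 / t))) (at t)"
proof -
  have inv: "((\<lambda>t. 1 / t) has_field_derivative - (1 / t\<^sup>2)) (at t)"
    using assms by (auto intro!: derivative_eq_intros simp: power2_eq_square)
  have "((\<lambda>t. poly P (1 / t)) has_field_derivative poly (pderiv P) (1 / t) * - (1 / t\<^sup>2)) (at t)"
    using DERIV_chain2[OF poly_DERIV inv] by simp
  moreover have "((\<lambda>t. exp (- (1 / t))) has_field_derivative exp (- (1 / t)) * (1 / t\<^sup>2)) (at t)"
    using assms by (auto intro!: derivative_eq_intros simp: power2_eq_square field_simps)
  ultimately have "((\<lambda>t. poly P (1 / t) * exp (- (1 / t))) has_field_derivative
      poly P (1 / t) * (exp (- (1 / t)) * (1 / t\<^sup>2)) + poly (pderiv P) (1 / t) * - (1 / t\<^sup>2) * exp (- (1 / t)))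
      (at t)"
    by (rule DERIV_mult')
  then show ?thesis
    by (simp add: flat_deriv_poly_def algebra_simps power2_eq_square)
qed

lemma has_field_derivative_flat_exp_poly:
  "(flat_exp_poly P has_field_derivative flat_exp_poly (flat_deriv_poly P) t) (at t)"
proof -
  consider "t > 0" | "t < 0" | "t = 0" by linarith
  then show ?thesis
  proof cases
    case 1
    then show ?thesis
      using has_field_derivative_transform_within_open[OF has_field_derivative_poly_inverse_exp[OF 1],
          where S="{0<..}" and g="flat_exp_poly P"]
      by (auto simp: flat_exp_poly_def)
  next
    case 2
    then show ?thesis
      using has_field_derivative_transform_within_open[where S="{..<0}" and g="flat_exp_poly P" and f="\<lambda>_. 0"]
      by (auto simp: flat_exp_poly_def)
  next
    case 3
    have left: "((\<lambda>y. (flat_exp_poly P y - flat_exp_poly P 0) / (y - 0)) \<longlongrightarrow> 0) (at_left 0)"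
    proof (rule Lim_transform_eventually[OF tendsto_const])
      show "\<forall>\<^sub>F y in at_left 0. 0 = (flat_exp_poly P y - flat_exp_poly P 0) / (y - 0)"
        by (auto simp: flat_exp_poly_def eventually_at_left_field intro!: exI[of _ "-1"])
    qed
    have right: "((\<lambda>y. (flat_exp_poly P y - flat_exp_poly P 0) / (y - 0)) \<longlongrightarrow> 0) (at_right 0)"
    proof (rule Lim_transform_eventually)
      \<comment> \<open>\<open>poly (pCons 0 P) s = s * poly P s\<close>: the difference quotient in terms of \<open>s = 1 / y\<close>\<close>
      show "((\<lambda>y. poly (pCons 0 P) (inverse y) / exp (inverse y)) \<longlongrightarrow> 0) (at_right 0)"
        using filterlim_compose[OF poly_over_exp_tendsto_0[of "pCons 0 P"] filterlim_inverse_at_top_right]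
        by simp
      show "\<forall>\<^sub>F y in at_right 0. poly (pCons 0 P) (inverse y) / exp (inverse y) =
                                (flat_exp_poly P y - flat_exp_poly P 0) / (y - 0)"
        by (auto simp: flat_exp_poly_def eventually_at_right_field exp_minus field_simps intro!: exI[of _ 1])
    qed
    have "(flat_exp_poly P has_field_derivative 0) (at 0)"
      unfolding has_field_derivative_iff using filterlim_split_at[OF left right] .
    then show ?thesis using 3 by (simp add: flat_exp_poly_def)
  qed
qed

lemma smooth_real_flat_exp_poly: "smooth_real (flat_exp_poly P)"
proof -
  have "differentiable_upto m (flat_exp_poly P)" for m
  proof (induction m arbitrary: P)
    case 0
    then show ?case
      using has_field_derivative_flat_exp_poly by (auto simp: differentiable_upto_0 field_differentiable_def)
  next
    case (Suc m)
    have "deriv (flat_exp_poly P) = flat_exp_poly (flat_deriv_poly P)"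
      using has_field_derivative_flat_exp_poly by (auto intro!: ext DERIV_imp_deriv)
    then show ?case
      using Suc has_field_derivative_flat_exp_poly
      by (auto simp: differentiable_upto_Suc field_differentiable_def)
  qed
  then show ?thesis by (simp add: smooth_real_def)
qed

lemma smooth_real_flat_exp: "smooth_real flat_exp"
proof -
  have "flat_exp = flat_exp_poly 1"
    by (auto simp: flat_exp_def flat_exp_poly_def)
  then show ?thesis using smooth_real_flat_exp_poly by metis
qed

section \<open>Smooth bumps on boxes\<close>

definition tensor_prod :: "('n::finite \<Rightarrow> real \<Rightarrow> real) \<Rightarrow> real^'n \<Rightarrow> real" where
  "tensor_prod G x = (\<Prod>i\<in>UNIV. G i (x $ i))"

lemma has_derivative_tensor_prod:
  assumes "\<And>i. smooth_real (G i)"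
  shows "(tensor_prod G has_derivative
           (\<lambda>v. \<Sum>i\<in>UNIV. (deriv (G i) (x $ i) * v $ i) * (\<Prod>j\<in>UNIV - {i}. G j (x $ j)))) (at x)"
proof -
  have "((\<lambda>y. G i (y $ i)) has_derivative (\<lambda>v. deriv (G i) (x $ i) * v $ i)) (at x)" for i
  proof -
    have "(G i has_derivative (\<lambda>h. deriv (G i) (x $ i) * h)) (at (x $ i))"
      using smooth_real_has_field_derivative[OF assms] by (simp add: has_field_derivative_def)
    from has_derivative_compose[OF bounded_linear_vec_nth[THEN bounded_linear_imp_has_derivative] this]
    show ?thesis by (simp add: o_def)
  qed
  then show ?thesis
    unfolding tensor_prod_def by (rule has_derivative_prod)
qed

lemma pdiff_tensor_prod:
  assumes "\<And>i. smooth_real (G i)"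
  shows "pdiff (tensor_prod G) j = tensor_prod (G(j := deriv (G j)))"
proof
  fix x
  have "pdiff (tensor_prod G) j x =
      (\<Sum>i\<in>UNIV. (deriv (G i) (x $ i) * axis j 1 $ i) * (\<Prod>k\<in>UNIV - {i}. G k (x $ k)))"
    unfolding pdiff_def frechet_derivative_at[OF has_derivative_tensor_prod[OF assms], symmetric] ..
  also have "\<dots> = deriv (G j) (x $ j) * (\<Prod>k\<in>UNIV - {j}. G k (x $ k))"
    by (subst sum.remove[of _ j]) (auto simp: axis_def)
  also have "\<dots> = tensor_prod (G(j := deriv (G j))) x"
    unfolding tensor_prod_def by (subst prod.remove[of _ j]) (auto intro!: prod.cong)
  finally show "pdiff (tensor_prod G) j x = tensor_prod (G(j := deriv (G j))) x" .
qed

lemma iter_pdiff_tensor_prod: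
  assumes "\<And>i. smooth_real (G i)"
  shows "\<exists>H. (\<forall>i. smooth_real (H i)) \<and> iter_pdiff (tensor_prod G) is = tensor_prod H"
proof (induction "is")
  case Nil
  then show ?case using assms by auto
next
  case (Cons j "is")
  then obtain H where H: "\<And>i. smooth_real (H i)" "iter_pdiff (tensor_prod G) is = tensor_prod H"
    by blast
  then have "iter_pdiff (tensor_prod G) (j # is) = tensor_prod (H(j := deriv (H j)))"
    using pdiff_tensor_prod[of H j] by simp
  moreover have "\<forall>i. smooth_real ((H(j := deriv (H j))) i)"
    using H smooth_real_deriv by auto
  ultimately show ?case by blast
qed

lemma smooth_fun_tensor_prod:
  assumes "\<And>i. smooth_real (G i)"
  shows "smooth_fun (tensor_prod G)"
  unfolding smooth_fun_def
proof (intro allI)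
  fix "is" x
  obtain H where "\<And>i. smooth_real (H i)" "iter_pdiff (tensor_prod G) is = tensor_prod H"
    using iter_pdiff_tensor_prod[of G, OF assms] by blast
  then show "iter_pdiff (tensor_prod G) is differentiable (at x)"
    using has_derivative_tensor_prod[of H x] unfolding differentiable_def by auto
qed

definition box_bump :: "real \<Rightarrow> real^'n \<Rightarrow> real^'n \<Rightarrow> real^'n \<Rightarrow> real" where
  "box_bump k c d = tensor_prod (\<lambda>i t. flat_exp (k * (t - c $ i) - 1) * flat_exp (k * (d $ i - t) - 1))"

lemma smooth_fun_box_bump: "smooth_fun (box_bump k c d)"
  unfolding box_bump_def
proof (rule smooth_fun_tensor_prod)
  fix i
  have "smooth_real (\<lambda>t. flat_exp (k * t + (- k * c $ i - 1)) * flat_exp ((- k) * t + (k * d $ i - 1)))"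
    by (intro smooth_real_mult smooth_real_compose_affine smooth_real_flat_exp)
  then show "smooth_real (\<lambda>t. flat_exp (k * (t - c $ i) - 1) * flat_exp (k * (d $ i - t) - 1))"
    by (simp add: algebra_simps)
qed

lemma box_bump_bounds: "0 \<le> box_bump k c d x" "box_bump k c d x \<le> 1"
  unfolding box_bump_def tensor_prod_def flat_exp_def
  by (auto intro!: prod_nonneg prod_le_1 mult_nonneg_nonneg mult_le_one)

lemma box_bump_borel_measurable: "box_bump k c d \<in> borel_measurable lebesgue"
proof -
  have "box_bump k c d differentiable (at x)" for x
    using smooth_fun_box_bump[of k c d] unfolding smooth_fun_def by (metis iter_pdiff.simps(1))
  then have "continuous_on UNIV (box_bump k c d)"
    by (simp add: continuous_at_imp_continuous_on differentiable_imp_continuous_within)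
  then have "box_bump k c d \<in> borel_measurable lborel"
    using borel_measurable_continuous_onI by simp
  then show ?thesis by (rule measurable_completion)
qed

lemma box_bump_nonzero_imp_mem:
  assumes "box_bump k c d x \<noteq> 0" "k > 0"
  shows "x \<in> cbox (c + (1 / k) *\<^sub>R 1) (d - (1 / k) *\<^sub>R 1)"
proof -
  have "k * (x $ i - c $ i) - 1 > 0 \<and> k * (d $ i - x $ i) - 1 > 0" for i
    using assms(1) unfolding box_bump_def tensor_prod_def flat_exp_def by (auto split: if_splits)
  then have margin: "1 / k < x $ i - c $ i \<and> 1 / k < d $ i - x $ i" for i
    using assms(2) by (simp add: divide_less_eq mult.commute)
  have "c $ i + 1 / k \<le> x $ i \<and> x $ i \<le> d $ i - 1 / k" for i
    using margin[of i] by linarith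
  then show ?thesis by (simp add: mem_box_cart)
qed

lemma test_fun_box_bump:
  assumes "box c d \<subseteq> \<Omega>" "k > 0"
  shows "test_fun \<Omega> (box_bump k c d)"
proof -
  let ?K = "cbox (c + (1 / k) *\<^sub>R 1) (d - (1 / k) *\<^sub>R 1)"
  have nonzero: "{x. box_bump k c d x \<noteq> 0} \<subseteq> ?K"
    using box_bump_nonzero_imp_mem assms(2) by blast
  have K: "tsupport (box_bump k c d) \<subseteq> ?K"
    unfolding tsupport_def by (rule closure_minimal[OF nonzero closed_cbox])
  have "?K \<subseteq> box c d"
  proof
    fix x assume "x \<in> ?K"
    then have "c $ i + 1 / k \<le> x $ i \<and> x $ i \<le> d $ i - 1 / k" for i
      by (simp add: mem_box_cart)
    moreover have "0 < 1 / k" using assms(2) by simp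
    ultimately have "c $ i < x $ i \<and> x $ i < d $ i" for i
      by (smt (verit))
    then show "x \<in> box c d" by (simp add: mem_box_cart)
  qed
  moreover have "compact (tsupport (box_bump k c d))"
    unfolding tsupport_def using bounded_subset[OF bounded_cbox nonzero] compact_closure by blast
  ultimately show ?thesis
    unfolding test_fun_def using K assms(1) smooth_fun_box_bump by blast
qed

lemma flat_exp_tendsto_1:
  assumes "a > 0"
  shows "(\<lambda>m. flat_exp (real (Suc m) * a - 1)) \<longlonglongrightarrow> 1"
proof -
  have lim: "filterlim (\<lambda>m. real (Suc m) * a - 1) at_top sequentially"
    using assms by real_asymp
  then have "(\<lambda>m. exp (- (1 / (real (Suc m) * a - 1)))) \<longlonglongrightarrow> exp (- 0)"
    by (intro tendsto_intros tendsto_divide_0[OF tendsto_const] filterlim_at_top_imp_at_infinity)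
  moreover have "eventually (\<lambda>m. real (Suc m) * a - 1 > 0) sequentially"
    using lim[unfolded filterlim_at_top_dense, rule_format, of 0] by simp
  ultimately show ?thesis
    by (simp add: Lim_transform_eventually flat_exp_def eventually_mono)
qed

lemma box_bump_tendsto_indicator:
  fixes c d x :: "real^'n"
  shows "(\<lambda>m. box_bump (real (Suc m)) c d x) \<longlonglongrightarrow> indicator (box c d) x"
proof (cases "x \<in> box c d")
  case True
  then have pos: "x $ i - c $ i > 0" "d $ i - x $ i > 0" for i
    by (auto simp: mem_box_cart)
  have "(\<lambda>m. box_bump (real (Suc m)) c d x) \<longlonglongrightarrow> (\<Prod>i\<in>(UNIV::'n set). 1 * 1)"
    unfolding box_bump_def tensor_prod_def by (intro tendsto_prod tendsto_mult flat_exp_tendsto_1 pos)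
  then show ?thesis using True by simp
next
  case False
  then obtain i where i: "x $ i \<le> c $ i \<or> d $ i \<le> x $ i"
    by (auto simp: mem_box_cart not_less)
  have "k * (x $ i - c $ i) - 1 \<le> 0 \<or> k * (d $ i - x $ i) - 1 \<le> 0" if "k > 0" for k :: real
    using i that mult_nonneg_nonpos[of k "x $ i - c $ i"] mult_nonneg_nonpos[of k "d $ i - x $ i"]
    by force
  then have "flat_exp (k * (x $ i - c $ i) - 1) * flat_exp (k * (d $ i - x $ i) - 1) = 0" if "k > 0" for k
    using that unfolding flat_exp_def by fastforce
  then have "box_bump (real (Suc m)) c d x = 0" for m
    unfolding box_bump_def tensor_prod_def by (intro prod_zero bexI[of _ i]) simp_all
  then show ?thesis using False by simp
qed

section \<open>The fundamental lemma of the calculus of variations\<close>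

(* Borel sets disjoint from \<Omega> are included so that countably many generating sets cover
   the whole space. *)
definition box_generator :: "(real^'n) set \<Rightarrow> (real^'n) set set" where
  "box_generator \<Omega> = {box c d | c d. box c d \<subseteq> \<Omega>} \<union> {A \<in> sets borel. A \<inter> \<Omega> = {}}"

lemma box_generator_subset_borel: "box_generator \<Omega> \<subseteq> sets borel"
  unfolding box_generator_def by auto

lemma Int_stable_box_generator: "Int_stable (box_generator \<Omega>)"
proof (rule Int_stableI)
  fix X Y assume X: "X \<in> box_generator \<Omega>" and Y: "Y \<in> box_generator \<Omega>"
  show "X \<inter> Y \<in> box_generator \<Omega>"
  proof (cases "X \<inter> \<Omega> = {} \<or> Y \<inter> \<Omega> = {}")
    case True
    moreover have "X \<inter> Y \<in> sets borel"
      using X Y box_generator_subset_borel by blast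
    ultimately show ?thesis unfolding box_generator_def by blast
  next
    case False
    then obtain c d c' d' where "X = box c d" "Y = box c' d'" "box c d \<subseteq> \<Omega>"
      using X Y unfolding box_generator_def by blast
    moreover have "box c d \<inter> box c' d' = box (\<chi> i. max (c $ i) (c' $ i)) (\<chi> i. min (d $ i) (d' $ i))"
      by (auto simp: mem_box_cart)
    ultimately have "X \<inter> Y = box (\<chi> i. max (c $ i) (c' $ i)) (\<chi> i. min (d $ i) (d' $ i))"
      "X \<inter> Y \<subseteq> \<Omega>"
      by auto
    then show ?thesis unfolding box_generator_def by force
  qed
qed

lemma countable_box_generator_cover:
  fixes S :: "(real^'n) set"
  assumes "open S" "S \<subseteq> \<Omega>"
  obtains D where "countable D" "D \<subseteq> box_generator \<Omega>" "\<Union>D = S"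
proof -
  obtain D where D: "countable D" "D \<subseteq> Pow S" "\<And>X. X \<in> D \<Longrightarrow> \<exists>a b. X = box a b" "\<Union>D = S"
    using open_countable_Union_open_box[OF assms(1)] by blast
  have "D \<subseteq> box_generator \<Omega>"
  proof
    fix X assume "X \<in> D"
    obtain a b where "X = box a b" using D(3) \<open>X \<in> D\<close> by blast
    moreover have "X \<subseteq> \<Omega>" using D(2) assms(2) \<open>X \<in> D\<close> by blast
    ultimately show "X \<in> box_generator \<Omega>" unfolding box_generator_def by blast
  qed
  with D(1,4) show thesis by (intro that)
qed

lemma sets_borel_eq_sigma_box_generator:
  fixes \<Omega> :: "(real^'n) set"
  assumes "open \<Omega>"
  shows "sets borel = sigma_sets UNIV (box_generator \<Omega>)"
proof
  show "sigma_sets UNIV (box_generator \<Omega>) \<subseteq> sets borel"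
    using sets.sigma_sets_subset[OF box_generator_subset_borel] by simp
next
  have "S \<in> sigma_sets UNIV (box_generator \<Omega>)" if S: "open S" for S :: "(real^'n) set"
  proof -
    have "S - \<Omega> \<in> box_generator \<Omega>"
      unfolding box_generator_def using S assms by auto
    then have outside: "S - \<Omega> \<in> sigma_sets UNIV (box_generator \<Omega>)" by auto
    obtain D where D: "countable D" "D \<subseteq> box_generator \<Omega>" "\<Union>D = S \<inter> \<Omega>"
      using countable_box_generator_cover[of "S \<inter> \<Omega>" \<Omega>] S assms by blast
    then have "X \<in> sigma_sets UNIV (box_generator \<Omega>)" if "X \<in> D" for X
      using that by (auto intro: sigma_sets.Basic)
    then have inside: "S \<inter> \<Omega> \<in> sigma_sets UNIV (box_generator \<Omega>)"
      using sigma_sets_UNION[OF D(1)] D(3) by metis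
    have "S = (S - \<Omega>) \<union> (S \<inter> \<Omega>)" by blast
    then show ?thesis using sigma_sets_Un[OF outside inside] by simp
  qed
  then show "sets borel \<subseteq> sigma_sets UNIV (box_generator \<Omega>)"
    unfolding sets_borel by (intro sigma_sets_mono) auto
qed

lemma ennreal_eq_ennreal_uminus_iff: "ennreal r = ennreal (- r) \<longleftrightarrow> r = 0"
proof
  assume eq: "ennreal r = ennreal (- r)"
  have "ennreal r = 0 \<or> ennreal (- r) = 0"
    by (cases "r \<ge> 0") (simp_all add: ennreal_eq_0_iff)
  then have "ennreal r = 0 \<and> ennreal (- r) = 0"
    using eq by metis
  then have "r \<le> 0 \<and> - r \<le> 0"
    by (simp only: ennreal_eq_0_iff)
  then show "r = 0" by linarith
qed simp

lemma emeasure_density_pos_eq_neg_on_box_generator: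
  fixes k :: "real^'n \<Rightarrow> real"
  assumes k: "integrable lborel k"
    and outside: "AE x in lborel. x \<notin> \<Omega> \<longrightarrow> k x = 0"
    and boxes: "\<And>c d. box c d \<subseteq> \<Omega> \<Longrightarrow> (\<integral>x. k x * indicator (box c d) x \<partial>lborel) = 0"
    and X: "X \<in> box_generator \<Omega>"
  shows "emeasure (density lborel (\<lambda>x. ennreal (k x))) X = emeasure (density lborel (\<lambda>x. ennreal (- k x))) X"
proof -
  have "X \<in> sets borel" using X box_generator_subset_borel by blast
  then have densities:
    "emeasure (density lborel (\<lambda>x. ennreal (k x))) X = (\<integral>\<^sup>+ x. ennreal (k x * indicator X x) \<partial>lborel)"
    "emeasure (density lborel (\<lambda>x. ennreal (- k x))) X = (\<integral>\<^sup>+ x. ennreal (- (k x * indicator X x)) \<partial>lborel)"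
    using k by (auto simp: emeasure_density indicator_def intro!: nn_integral_cong)
  show ?thesis
  proof (cases "X \<inter> \<Omega> = {}")
    case True
    then have "AE x in lborel. ennreal (k x * indicator X x) = 0"
      and "AE x in lborel. ennreal (- (k x * indicator X x)) = 0"
      using outside by (auto simp: indicator_def elim!: AE_mp)
    from this[THEN nn_integral_cong_AE] show ?thesis
      using densities by simp
  next
    case False
    then obtain c d where cd: "X = box c d" "box c d \<subseteq> \<Omega>"
      using X unfolding box_generator_def by blast
    have "integrable lborel (\<lambda>x. k x * indicator X x)"
      using integrable_mult_indicator[of X lborel k] k cd by (simp add: mult.commute)
    then obtain r q where
      "(\<integral>\<^sup>+ x. ennreal (k x * indicator X x) \<partial>lborel) = ennreal r"
      "(\<integral>\<^sup>+ x. ennreal (- (k x * indicator X x)) \<partial>lborel) = ennreal q"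
      "(\<integral>x. k x * indicator X x \<partial>lborel) = r - q"
      by (rule integrableE) auto
    then show ?thesis
      using boxes[OF cd(2)] cd densities by simp
  qed
qed

lemma AE_lborel_eq_0_if_box_integrals_eq_0:
  fixes k :: "real^'n \<Rightarrow> real"
  assumes \<Omega>: "open \<Omega>" and k: "integrable lborel k"
    and outside: "AE x in lborel. x \<notin> \<Omega> \<longrightarrow> k x = 0"
    and boxes: "\<And>c d. box c d \<subseteq> \<Omega> \<Longrightarrow> (\<integral>x. k x * indicator (box c d) x \<partial>lborel) = 0"
  shows "AE x in lborel. k x = 0"
proof -
  \<comment> \<open>The positive and negative parts of \<open>k\<close> are densities of finite measures that agree on
    the generator, hence everywhere.\<close>
  define f where "f x = ennreal (k x)" for x
  define g where "g x = ennreal (- k x)" for x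
  have f: "f \<in> borel_measurable lborel" and g: "g \<in> borel_measurable lborel"
    unfolding f_def g_def using k by auto
  have finite: "integral\<^sup>N lborel f \<noteq> \<infinity>"
    using integrableD(2)[OF k] unfolding f_def by auto
  have generator: "emeasure (density lborel f) X = emeasure (density lborel g) X"
    if "X \<in> box_generator \<Omega>" for X
    unfolding f_def g_def using emeasure_density_pos_eq_neg_on_box_generator[OF k outside boxes that] .
  obtain D where D: "countable D" "D \<subseteq> box_generator \<Omega>" "\<Union>D = \<Omega>"
    using countable_box_generator_cover[OF \<Omega> order_refl] by blast
  have "- \<Omega> \<in> box_generator \<Omega>"
    using \<Omega> unfolding box_generator_def by auto
  then have cover: "insert (- \<Omega>) D \<subseteq> box_generator \<Omega>"
    using D(2) by blast
  have "density lborel f = density lborel g"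
  proof (rule measure_eqI_generator_eq_countable[OF Int_stable_box_generator _ generator])
    show "sets (density lborel f) = sigma_sets UNIV (box_generator \<Omega>)"
      and "sets (density lborel g) = sigma_sets UNIV (box_generator \<Omega>)"
      using sets_borel_eq_sigma_box_generator[OF \<Omega>] by simp_all
    show "\<Union> (insert (- \<Omega>) D) = UNIV" using D(3) by blast
    show "emeasure (density lborel f) X \<noteq> \<infinity>" if "X \<in> insert (- \<Omega>) D" for X
    proof -
      have "X \<in> sets borel" using that cover box_generator_subset_borel by blast
      then have "emeasure (density lborel f) X = (\<integral>\<^sup>+ x. f x * indicator X x \<partial>lborel)"
        using emeasure_density[OF f] by simp
      also have "\<dots> \<le> integral\<^sup>N lborel f"
        by (intro nn_integral_mono) (auto simp: indicator_def)
      finally show ?thesis using finite by (auto simp: top_unique)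
    qed
  qed (use cover D(1) in simp_all)
  then have "AE x in lborel. f x = g x"
    using finite_density_unique[OF f g _ _ finite] by simp
  then show ?thesis
    unfolding f_def g_def ennreal_eq_ennreal_uminus_iff .
qed

lemma AE_lebesgue_eq_0_if_box_integrals_eq_0:
  fixes k :: "real^'n \<Rightarrow> real"
  assumes \<Omega>: "open \<Omega>" and k: "integrable lebesgue k"
    and outside: "\<And>x. x \<notin> \<Omega> \<Longrightarrow> k x = 0"
    and boxes: "\<And>c d. box c d \<subseteq> \<Omega> \<Longrightarrow> (\<integral>x. k x * indicator (box c d) x \<partial>lebesgue) = 0"
  shows "AE x in lebesgue. k x = 0"
proof -
  have k_meas: "k \<in> borel_measurable lebesgue" using k by auto
  obtain k' where k': "k' \<in> borel_measurable lborel" and ae_lborel: "AE x in lborel. k x = k' x"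
    using completion_ex_borel_measurable_real[OF k_meas] by blast
  have ae: "AE x in lebesgue. k x = k' x" using ae_lborel by (rule AE_completion)
  have k'_meas: "k' \<in> borel_measurable lebesgue" using k' by (rule measurable_completion)
  have "integrable lebesgue k'"
    using integrable_cong_AE[OF k_meas k'_meas ae] k by simp
  then have "integrable lborel k'"
    using integrable_completion[OF k'] by simp
  moreover have "AE x in lborel. x \<notin> \<Omega> \<longrightarrow> k' x = 0"
    using ae_lborel outside by auto
  moreover have "(\<integral>x. k' x * indicator (box c d) x \<partial>lborel) = 0" if "box c d \<subseteq> \<Omega>" for c d
  proof -
    have "(\<integral>x. k' x * indicator (box c d) x \<partial>lborel) = (\<integral>x. k' x * indicator (box c d) x \<partial>lebesgue)"
      using k' by (intro integral_completion[symmetric]) auto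
    also have "\<dots> = (\<integral>x. k x * indicator (box c d) x \<partial>lebesgue)"
      using ae k_meas k'_meas
      by (intro integral_cong_AE) (auto intro!: borel_measurable_times borel_measurable_indicator)
    finally show ?thesis using boxes[OF that] by simp
  qed
  ultimately have "AE x in lborel. k' x = 0"
    by (rule AE_lborel_eq_0_if_box_integrals_eq_0[OF \<Omega>])
  then show ?thesis using ae AE_completion by fastforce
qed

lemma set_integrable_mult_bounded:
  fixes g \<phi> :: "real^'n \<Rightarrow> real"
  assumes "set_integrable lebesgue \<Omega> g" "\<phi> \<in> borel_measurable lebesgue" "\<And>x. \<bar>\<phi> x\<bar> \<le> 1"
  shows "set_integrable lebesgue \<Omega> (\<lambda>x. g x * \<phi> x)"
proof (rule set_integrable_bound[OF assms(1)])
  have "(\<lambda>x. indicator \<Omega> x *\<^sub>R g x) \<in> borel_measurable lebesgue"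
    using assms(1) unfolding set_integrable_def by auto
  then have "(\<lambda>x. (indicator \<Omega> x *\<^sub>R g x) * \<phi> x) \<in> borel_measurable lebesgue"
    using assms(2) by measurable
  then show "set_borel_measurable lebesgue \<Omega> (\<lambda>x. g x * \<phi> x)"
    unfolding set_borel_measurable_def by (simp add: mult.assoc)
  show "AE x in lebesgue. x \<in> \<Omega> \<longrightarrow> norm (g x * \<phi> x) \<le> norm (g x)"
    using assms(3) by (auto simp: abs_mult intro!: mult_left_le)
qed

(* Only box bumps are tested, so test functions bounded by 1 and measurable suffice. *)
lemma AE_eq_0_if_integral_test_fun_eq_0:
  fixes h :: "real^'n \<Rightarrow> real"
  assumes \<Omega>: "open \<Omega>" and h: "set_integrable lebesgue \<Omega> h"
    and test: "\<And>\<phi>. test_fun \<Omega> \<phi> \<Longrightarrow> (\<And>x. \<bar>\<phi> x\<bar> \<le> 1) \<Longrightarrow> \<phi> \<in> borel_measurable lebesgue \<Longrightarrow>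
                 (LINT x:\<Omega>|lebesgue. h x * \<phi> x) = 0"
  shows "AE x in lebesgue. x \<in> \<Omega> \<longrightarrow> h x = 0"
proof -
  define k where "k x = indicator \<Omega> x * h x" for x
  have k: "integrable lebesgue k" using h unfolding set_integrable_def k_def by simp
  have "AE x in lebesgue. k x = 0"
  proof (rule AE_lebesgue_eq_0_if_box_integrals_eq_0[OF \<Omega> k])
    show "\<And>x. x \<notin> \<Omega> \<Longrightarrow> k x = 0" unfolding k_def by simp
    fix c d :: "real^'n" assume box: "box c d \<subseteq> \<Omega>"
    let ?bump = "\<lambda>m. box_bump (real (Suc m)) c d"
    have "(\<lambda>m. \<integral>x. k x * ?bump m x \<partial>lebesgue) \<longlonglongrightarrow> (\<integral>x. k x * indicator (box c d) x \<partial>lebesgue)"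
    proof (rule integral_dominated_convergence[where w="\<lambda>x. norm (k x)"])
      show "(\<lambda>x. k x * indicator (box c d) x) \<in> borel_measurable lebesgue"
        using k by (intro borel_measurable_times borel_measurable_indicator) auto
      show "(\<lambda>x. k x * ?bump m x) \<in> borel_measurable lebesgue" for m
        using k box_bump_borel_measurable by (intro borel_measurable_times) auto
      show "AE x in lebesgue. (\<lambda>m. k x * ?bump m x) \<longlonglongrightarrow> k x * indicator (box c d) x"
        by (intro AE_I2 tendsto_mult_left box_bump_tendsto_indicator)
      show "AE x in lebesgue. norm (k x * ?bump m x) \<le> norm (k x)" for m
        using box_bump_bounds[of "real (Suc m)" c d] by (intro AE_I2) (simp add: abs_mult mult_left_le)
    qed (use k in simp)
    moreover have "(\<integral>x. k x * ?bump m x \<partial>lebesgue) = 0" for m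
    proof -
      have "(\<integral>x. k x * ?bump m x \<partial>lebesgue) = (LINT x:\<Omega>|lebesgue. h x * ?bump m x)"
        unfolding k_def set_lebesgue_integral_def by (simp add: mult.assoc)
      also have "\<dots> = 0"
        using box_bump_bounds[of "real (Suc m)" c d]
        by (intro test test_fun_box_bump[OF box] box_bump_borel_measurable) auto
      finally show ?thesis .
    qed
    ultimately show "(\<integral>x. k x * indicator (box c d) x \<partial>lebesgue) = 0"
      by (simp add: LIMSEQ_const_iff)
  qed
  then show ?thesis
    by (rule AE_mp) (auto simp: k_def)
qed

section \<open>Square-integrable functions\<close>

lemma L2D:
  assumes "L2 \<Omega> f"
  shows "set_borel_measurable lebesgue \<Omega> f" "set_integrable lebesgue \<Omega> (\<lambda>x. (f x)^2)"
  using assms unfolding L2_def by auto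

lemma set_borel_measurable_mult:
  fixes f g :: "'a \<Rightarrow> real"
  assumes "set_borel_measurable M \<Omega> f" "set_borel_measurable M \<Omega> g"
  shows "set_borel_measurable M \<Omega> (\<lambda>x. f x * g x)"
proof -
  have "(\<lambda>x. indicator \<Omega> x *\<^sub>R (f x * g x)) = (\<lambda>x. (indicator \<Omega> x *\<^sub>R f x) * (indicator \<Omega> x *\<^sub>R g x))"
    by (auto simp: indicator_def)
  then show ?thesis using assms unfolding set_borel_measurable_def by simp
qed

lemma set_integrable_L2_mult:
  assumes "L2 \<Omega> f" "L2 \<Omega> g"
  shows "set_integrable lebesgue \<Omega> (\<lambda>x. f x * g x)"
proof (rule set_integrable_bound)
  show "set_integrable lebesgue \<Omega> (\<lambda>x. (f x)^2 + (g x)^2)"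
    using L2D(2)[OF assms(1)] L2D(2)[OF assms(2)] by (rule set_integral_add)
  show "set_borel_measurable lebesgue \<Omega> (\<lambda>x. f x * g x)"
    using set_borel_measurable_mult[OF L2D(1)[OF assms(1)] L2D(1)[OF assms(2)]] .
  have "\<bar>a * b\<bar> \<le> a^2 + b^2" for a b :: real
  proof -
    have "2 * \<bar>a\<bar> * \<bar>b\<bar> \<le> \<bar>a\<bar>^2 + \<bar>b\<bar>^2" by (rule sum_squares_bound)
    moreover have "0 \<le> \<bar>a\<bar> * \<bar>b\<bar>" by simp
    ultimately show ?thesis unfolding abs_mult power2_abs by linarith
  qed
  then show "AE x in lebesgue. x \<in> \<Omega> \<longrightarrow> norm (f x * g x) \<le> norm ((f x)^2 + (g x)^2)"
    by simp
qed

lemma set_integrable_L2: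
  assumes "\<Omega> \<in> lmeasurable" "L2 \<Omega> f"
  shows "set_integrable lebesgue \<Omega> f"
proof (rule set_integrable_bound)
  have "set_integrable lebesgue \<Omega> (\<lambda>_. 1::real)"
    using assms(1) unfolding set_integrable_def
    by (auto simp: fmeasurable_def intro!: integrable_real_indicator)
  then show "set_integrable lebesgue \<Omega> (\<lambda>x. 1 + (f x)^2)"
    using L2D(2)[OF assms(2)] by (rule set_integral_add)
  show "set_borel_measurable lebesgue \<Omega> f" using L2D(1)[OF assms(2)] .
  have "\<bar>a\<bar> \<le> 1 + a^2" for a :: real
  proof (cases "\<bar>a\<bar> \<le> 1")
    case False
    then have "\<bar>a\<bar> * 1 \<le> \<bar>a\<bar> * \<bar>a\<bar>" by (intro mult_left_mono) auto
    then show ?thesis by (simp add: power2_eq_square abs_mult_self_eq)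
  qed (use zero_le_power2[of a] in linarith)
  then show "AE x in lebesgue. x \<in> \<Omega> \<longrightarrow> norm (f x) \<le> norm (1 + (f x)^2)"
    by simp
qed

lemma L2_zero: "L2 \<Omega> (\<lambda>x. 0)"
  unfolding L2_def set_borel_measurable_def set_integrable_def by simp

lemma L2_add:
  assumes "L2 \<Omega> f" "L2 \<Omega> g"
  shows "L2 \<Omega> (\<lambda>x. f x + g x)"
proof -
  have "(\<lambda>x. indicator \<Omega> x *\<^sub>R (f x + g x)) = (\<lambda>x. indicator \<Omega> x *\<^sub>R f x + indicator \<Omega> x *\<^sub>R g x)"
    by (simp add: distrib_left)
  then have "set_borel_measurable lebesgue \<Omega> (\<lambda>x. f x + g x)"
    using L2D(1)[OF assms(1)] L2D(1)[OF assms(2)] unfolding set_borel_measurable_def by simp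
  moreover have "set_integrable lebesgue \<Omega> (\<lambda>x. (f x)^2 + 2 * (f x * g x) + (g x)^2)"
    using L2D(2)[OF assms(1)] set_integrable_L2_mult[OF assms] L2D(2)[OF assms(2)]
    by (intro set_integral_add(1)) auto
  moreover have "(\<lambda>x. (f x + g x)^2) = (\<lambda>x. (f x)^2 + 2 * (f x * g x) + (g x)^2)"
    by (simp add: power2_eq_square algebra_simps)
  ultimately show ?thesis unfolding L2_def by simp
qed

lemma L2_scale:
  assumes "L2 \<Omega> f"
  shows "L2 \<Omega> (\<lambda>x. c * f x)"
proof -
  have "set_borel_measurable lebesgue \<Omega> (\<lambda>x. c * f x)"
    using L2D(1)[OF assms] unfolding set_borel_measurable_def by (simp add: mult.left_commute)
  moreover have "set_integrable lebesgue \<Omega> (\<lambda>x. c^2 * (f x)^2)"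
    using L2D(2)[OF assms] by simp
  ultimately show ?thesis unfolding L2_def by (simp add: power_mult_distrib)
qed

lemma L2_sum:
  assumes "\<And>i. i \<in> I \<Longrightarrow> L2 \<Omega> (F i)"
  shows "L2 \<Omega> (\<lambda>x. \<Sum>i\<in>I. F i x)"
  using assms
proof (induction I rule: infinite_finite_induct)
  case (insert a I)
  then show ?case using L2_add[of \<Omega> "F a" "\<lambda>x. \<Sum>i\<in>I. F i x"] by simp
qed (simp_all add: L2_zero)

lemma L2inner_commute: "L2inner \<Omega> f g = L2inner \<Omega> g f"
  unfolding L2inner_def by (simp add: mult.commute)

lemma L2inner_scale_left: "L2inner \<Omega> (\<lambda>x. c * f x) g = c * L2inner \<Omega> f g"
  unfolding L2inner_def by (simp add: mult.assoc)

lemma L2inner_scale_right: "L2inner \<Omega> f (\<lambda>x. c * g x) = c * L2inner \<Omega> f g"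
  unfolding L2inner_def by (simp add: mult.left_commute)

lemma L2inner_zero_right: "L2inner \<Omega> f (\<lambda>x. 0) = 0"
  unfolding L2inner_def by simp

lemma L2inner_self_nonneg: "0 \<le> L2inner \<Omega> f f"
  unfolding L2inner_def set_lebesgue_integral_def
  by (intro integral_nonneg_AE AE_I2) (auto simp: indicator_def)

lemma L2norm_power2: "(L2norm \<Omega> f)^2 = L2inner \<Omega> f f"
  unfolding L2norm_def using L2inner_self_nonneg by simp

lemma L2inner_add_left:
  assumes "L2 \<Omega> f" "L2 \<Omega> g" "L2 \<Omega> h"
  shows "L2inner \<Omega> (\<lambda>x. f x + g x) h = L2inner \<Omega> f h + L2inner \<Omega> g h"
proof -
  have "L2inner \<Omega> (\<lambda>x. f x + g x) h = (LINT x:\<Omega>|lebesgue. f x * h x + g x * h x)"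
    unfolding L2inner_def by (simp add: algebra_simps)
  also have "\<dots> = L2inner \<Omega> f h + L2inner \<Omega> g h"
    unfolding L2inner_def using set_integrable_L2_mult[OF assms(1,3)] set_integrable_L2_mult[OF assms(2,3)]
    by (rule set_integral_add(2))
  finally show ?thesis .
qed

lemma L2inner_add_right:
  assumes "L2 \<Omega> f" "L2 \<Omega> g" "L2 \<Omega> h"
  shows "L2inner \<Omega> h (\<lambda>x. f x + g x) = L2inner \<Omega> h f + L2inner \<Omega> h g"
  using L2inner_add_left[OF assms] by (simp add: L2inner_commute)

lemma L2inner_sum_left:
  assumes "finite I" "\<And>i. i \<in> I \<Longrightarrow> L2 \<Omega> (F i)" "L2 \<Omega> h"
  shows "L2inner \<Omega> (\<lambda>x. \<Sum>i\<in>I. F i x) h = (\<Sum>i\<in>I. L2inner \<Omega> (F i) h)"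
  using assms(1,2)
proof (induction I rule: finite_induct)
  case empty
  then show ?case using L2inner_zero_right[of \<Omega> h] by (simp add: L2inner_commute)
next
  case (insert a I)
  then have "L2inner \<Omega> (\<lambda>x. \<Sum>i\<in>insert a I. F i x) h = L2inner \<Omega> (F a) h + L2inner \<Omega> (\<lambda>x. \<Sum>i\<in>I. F i x) h"
    using assms(3) by (simp add: L2inner_add_left L2_sum)
  then show ?case using insert by simp
qed

lemma L2inner_sum_right:
  assumes "finite I" "\<And>i. i \<in> I \<Longrightarrow> L2 \<Omega> (F i)" "L2 \<Omega> h"
  shows "L2inner \<Omega> h (\<lambda>x. \<Sum>i\<in>I. F i x) = (\<Sum>i\<in>I. L2inner \<Omega> h (F i))"
  using L2inner_sum_left[OF assms] by (simp add: L2inner_commute)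

lemma L2inner_cong_AE_left:
  assumes "L2 \<Omega> f" "L2 \<Omega> f'" "L2 \<Omega> g" "AE x in lebesgue. x \<in> \<Omega> \<longrightarrow> f x = f' x"
  shows "L2inner \<Omega> f g = L2inner \<Omega> f' g"
  unfolding L2inner_def set_lebesgue_integral_def
proof (rule integral_cong_AE)
  show "(\<lambda>x. indicator \<Omega> x *\<^sub>R (f x * g x)) \<in> borel_measurable lebesgue"
    and "(\<lambda>x. indicator \<Omega> x *\<^sub>R (f' x * g x)) \<in> borel_measurable lebesgue"
    using set_borel_measurable_mult[OF L2D(1)[OF assms(1)] L2D(1)[OF assms(3)]]
      set_borel_measurable_mult[OF L2D(1)[OF assms(2)] L2D(1)[OF assms(3)]]
    unfolding set_borel_measurable_def by auto
  show "AE x in lebesgue. indicator \<Omega> x *\<^sub>R (f x * g x) = indicator \<Omega> x *\<^sub>R (f' x * g x)"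
    using assms(4) by (auto simp: indicator_def)
qed

lemma L2inner_cong_AE_right:
  assumes "L2 \<Omega> f" "L2 \<Omega> g" "L2 \<Omega> g'" "AE x in lebesgue. x \<in> \<Omega> \<longrightarrow> g x = g' x"
  shows "L2inner \<Omega> f g = L2inner \<Omega> f g'"
  using L2inner_cong_AE_left[OF assms(2,3,1,4)] by (simp add: L2inner_commute)

lemma abs_mult_le_weighted_squares:
  fixes a b t :: real
  assumes "t > 0"
  shows "\<bar>a * b\<bar> \<le> (t * a^2 + b^2 / t) / 2"
proof -
  have "0 \<le> (t * \<bar>a\<bar> - \<bar>b\<bar>)^2" by simp
  then have "2 * t * \<bar>a * b\<bar> \<le> t^2 * a^2 + b^2"
    using assms by (simp add: power2_eq_square algebra_simps abs_mult)
  then show ?thesis using assms by (simp add: field_simps power2_eq_square)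
qed

lemma L2inner_weighted_amgm:
  assumes "L2 \<Omega> f" "L2 \<Omega> g" "t > 0"
  shows "\<bar>L2inner \<Omega> f g\<bar> \<le> (t * L2inner \<Omega> f f + L2inner \<Omega> g g / t) / 2"
proof -
  have fg: "set_integrable lebesgue \<Omega> (\<lambda>x. f x * g x)" by (rule set_integrable_L2_mult[OF assms(1,2)])
  have bound: "set_integrable lebesgue \<Omega> (\<lambda>x. (t * (f x)^2 + (g x)^2 / t) / 2)"
    using L2D(2)[OF assms(1)] L2D(2)[OF assms(2)] by (intro set_integrable_divide set_integral_add(1)) auto
  have "\<bar>L2inner \<Omega> f g\<bar> \<le> (LINT x:\<Omega>|lebesgue. \<bar>f x * g x\<bar>)"
    unfolding L2inner_def using set_integral_norm_bound[OF fg] by simp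
  also have "\<dots> \<le> (LINT x:\<Omega>|lebesgue. (t * (f x)^2 + (g x)^2 / t) / 2)"
    using set_integrable_abs[OF fg] bound abs_mult_le_weighted_squares[OF assms(3)]
    by (rule set_integral_mono)
  also have "\<dots> = (t * L2inner \<Omega> f f + L2inner \<Omega> g g / t) / 2"
    using L2D(2)[OF assms(1)] L2D(2)[OF assms(2)]
    by (simp add: L2inner_def set_integral_add(2) power2_eq_square)
  finally show ?thesis .
qed

lemma le_sqrt_mult_sqrt_if_weighted_amgm:
  fixes X a b :: real
  assumes amgm: "\<And>t. t > 0 \<Longrightarrow> X \<le> (t * a + b / t) / 2" and "a \<ge> 0" "b \<ge> 0"
  shows "X \<le> sqrt a * sqrt b"
proof -
  have "X \<le> sqrt (a + e) * sqrt (b + e)" if "e > 0" for e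
  proof -
    define r s where "r = sqrt (a + e)" and "s = sqrt (b + e)"
    have rs: "r > 0" "s > 0" "a + e = r^2" "b + e = s^2"
      using assms that by (simp_all add: r_def s_def)
    have t: "s / r > 0" using rs by simp
    have "X \<le> (s / r * a + b / (s / r)) / 2" by (rule amgm[OF t])
    also have "\<dots> \<le> (s / r * (a + e) + (b + e) / (s / r)) / 2"
      using t that by (intro divide_right_mono add_mono mult_left_mono) simp_all
    also have "\<dots> = r * s"
      unfolding rs(3,4) using rs(1,2) by (simp add: field_simps power2_eq_square)
    finally have "X \<le> r * s" .
    then show ?thesis by (simp add: r_def s_def)
  qed
  moreover have "((\<lambda>e. sqrt (a + e) * sqrt (b + e)) \<longlongrightarrow> sqrt (a + 0) * sqrt (b + 0)) (at_right 0)"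
    by (intro tendsto_intros)
  ultimately show ?thesis
    by (intro tendsto_le[OF trivial_limit_at_right_real _ tendsto_const])
       (auto simp: eventually_at_right_field intro!: exI[of _ 1])
qed

lemma abs_L2inner_le:
  assumes "L2 \<Omega> f" "L2 \<Omega> g"
  shows "\<bar>L2inner \<Omega> f g\<bar> \<le> L2norm \<Omega> f * L2norm \<Omega> g"
  unfolding L2norm_def
  by (rule le_sqrt_mult_sqrt_if_weighted_amgm[OF L2inner_weighted_amgm[OF assms]])
     (auto intro: L2inner_self_nonneg)

lemma sum_weighted_amgm:
  fixes X Y Z :: "'i \<Rightarrow> real"
  assumes "\<And>i. i \<in> I \<Longrightarrow> \<bar>X i\<bar> \<le> (t * Y i + Z i / t) / 2"
  shows "\<bar>\<Sum>i\<in>I. X i\<bar> \<le> (t * (\<Sum>i\<in>I. Y i) + (\<Sum>i\<in>I. Z i) / t) / 2"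
proof -
  have "\<bar>\<Sum>i\<in>I. X i\<bar> \<le> (\<Sum>i\<in>I. \<bar>X i\<bar>)" by (rule sum_abs)
  also have "\<dots> \<le> (\<Sum>i\<in>I. (t * Y i + Z i / t) / 2)" using assms by (intro sum_mono) auto
  also have "\<dots> = (t * (\<Sum>i\<in>I. Y i) + (\<Sum>i\<in>I. Z i) / t) / 2"
    by (simp add: sum.distrib sum_divide_distrib[symmetric] sum_distrib_left)
  finally show ?thesis .
qed

lemma L2inner_sum_self_le:
  assumes "finite I" "\<And>i. i \<in> I \<Longrightarrow> L2 \<Omega> (F i)"
  shows "L2inner \<Omega> (\<lambda>x. \<Sum>i\<in>I. F i x) (\<lambda>x. \<Sum>i\<in>I. F i x) \<le> real (card I) * (\<Sum>i\<in>I. L2inner \<Omega> (F i) (F i))"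
proof -
  define A where "A i = L2inner \<Omega> (F i) (F i)" for i
  have "L2inner \<Omega> (\<lambda>x. \<Sum>i\<in>I. F i x) (\<lambda>x. \<Sum>i\<in>I. F i x) = (\<Sum>i\<in>I. \<Sum>j\<in>I. L2inner \<Omega> (F i) (F j))"
    using assms by (simp add: L2inner_sum_left L2inner_sum_right L2_sum)
  also have "\<dots> \<le> (\<Sum>i\<in>I. \<Sum>j\<in>I. (A i + A j) / 2)"
  proof (intro sum_mono)
    fix i j assume "i \<in> I" "j \<in> I"
    then show "L2inner \<Omega> (F i) (F j) \<le> (A i + A j) / 2"
      using abs_le_D1[OF L2inner_weighted_amgm[of \<Omega> "F i" "F j" 1]] assms(2) unfolding A_def by simp
  qed
  also have "\<dots> = real (card I) * (\<Sum>i\<in>I. A i)"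
    by (simp add: sum.distrib add_divide_distrib sum_divide_distrib[symmetric] sum.swap[of _ I I]
        sum_distrib_left[symmetric] sum_distrib_right[symmetric] mult.commute)
  finally show ?thesis unfolding A_def .
qed

lemma H1_imp_L2: "H1 \<Omega> f \<Longrightarrow> L2 \<Omega> f"
  unfolding H1_def by simp

lemma L2_wpd: "H1 \<Omega> f \<Longrightarrow> L2 \<Omega> (wpd \<Omega> f i)"
  and weak_partial_wpd: "H1 \<Omega> f \<Longrightarrow> weak_partial \<Omega> f i (wpd \<Omega> f i)"
  unfolding H1_def wpd_def by (metis (mono_tags, lifting) someI_ex)+

lemma weak_partial_unique:
  fixes \<Omega> :: "(real^'n) set"
  assumes \<Omega>: "open \<Omega>" "bounded \<Omega>"
    and L2: "L2 \<Omega> g" "L2 \<Omega> g'"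
    and weak: "weak_partial \<Omega> f i g" "weak_partial \<Omega> f' i g'"
    and scaled: "\<And>x. f' x = c * f x"
  shows "AE x in lebesgue. x \<in> \<Omega> \<longrightarrow> g' x = c * g x"
proof -
  have "\<Omega> \<in> lmeasurable" using \<Omega> by (simp add: bounded_set_imp_lmeasurable)
  then have g: "set_integrable lebesgue \<Omega> g" and g': "set_integrable lebesgue \<Omega> g'"
    using set_integrable_L2 L2 by auto
  have "AE x in lebesgue. x \<in> \<Omega> \<longrightarrow> g' x - c * g x = 0"
  proof (rule AE_eq_0_if_integral_test_fun_eq_0[OF \<Omega>(1)])
    show "set_integrable lebesgue \<Omega> (\<lambda>x. g' x - c * g x)"
      using g g' by (intro set_integral_diff(1)) auto
    fix \<phi> :: "real^'n \<Rightarrow> real"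
    assume test: "test_fun \<Omega> \<phi>" and "\<And>x. \<bar>\<phi> x\<bar> \<le> 1" "\<phi> \<in> borel_measurable lebesgue"
    then have g\<phi>: "set_integrable lebesgue \<Omega> (\<lambda>x. g x * \<phi> x)"
      and g'\<phi>: "set_integrable lebesgue \<Omega> (\<lambda>x. g' x * \<phi> x)"
      using set_integrable_mult_bounded g g' by blast+
    have "(LINT x:\<Omega>|lebesgue. g' x * \<phi> x) = c * (LINT x:\<Omega>|lebesgue. g x * \<phi> x)"
      using weak test unfolding weak_partial_def scaled by (simp add: mult.assoc)
    then show "(LINT x:\<Omega>|lebesgue. (g' x - c * g x) * \<phi> x) = 0"
      using g\<phi> g'\<phi> by (simp add: left_diff_distrib mult.assoc set_integral_diff(2))
  qed
  then show ?thesis by (rule AE_mp) auto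
qed

lemma wpd_scale_AE:
  fixes \<Omega> :: "(real^'n) set"
  assumes "open \<Omega>" "bounded \<Omega>" "H1 \<Omega> p" "H1 \<Omega> (\<lambda>x. c * p x)"
  shows "AE x in lebesgue. x \<in> \<Omega> \<longrightarrow> wpd \<Omega> (\<lambda>x. c * p x) i x = c * wpd \<Omega> p i x"
  by (rule weak_partial_unique[OF assms(1,2) L2_wpd[OF assms(3)] L2_wpd[OF assms(4)]
        weak_partial_wpd[OF assms(3)] weak_partial_wpd[OF assms(4)]]) simp

section \<open>The bilinear forms\<close>

lemma L2_vgrad: "H1v \<Omega> u \<Longrightarrow> L2 \<Omega> (vgrad \<Omega> u j i)"
  unfolding H1v_def vgrad_def using L2_wpd by blast

lemma strain_eq: "strain \<Omega> u j i = (\<lambda>x. (1/2) * (vgrad \<Omega> u j i x + vgrad \<Omega> u i j x))"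
  unfolding strain_def by auto

lemma L2_strain: "H1v \<Omega> u \<Longrightarrow> L2 \<Omega> (strain \<Omega> u j i)"
  unfolding strain_eq by (intro L2_scale L2_add L2_vgrad)

lemma strain_diag: "strain \<Omega> u j j = vgrad \<Omega> u j j"
  unfolding strain_def by auto

lemma L2_wdiv: "H1v \<Omega> u \<Longrightarrow> L2 \<Omega> (wdiv \<Omega> u)"
  unfolding wdiv_def by (intro L2_sum L2_vgrad)

definition strain_inner :: "(real^'n) set \<Rightarrow> (real^'n \<Rightarrow> real^'n) \<Rightarrow> (real^'n \<Rightarrow> real^'n) \<Rightarrow> real" where
  "strain_inner \<Omega> u \<phi> = (\<Sum>j\<in>UNIV. \<Sum>i\<in>UNIV. L2inner \<Omega> (strain \<Omega> u j i) (strain \<Omega> \<phi> j i))"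

definition div_inner :: "(real^'n) set \<Rightarrow> (real^'n \<Rightarrow> real^'n) \<Rightarrow> (real^'n \<Rightarrow> real^'n) \<Rightarrow> real" where
  "div_inner \<Omega> u \<phi> = L2inner \<Omega> (wdiv \<Omega> u) (wdiv \<Omega> \<phi>)"

definition grad_inner :: "(real^'n) set \<Rightarrow> (real^'n \<Rightarrow> real) \<Rightarrow> (real^'n \<Rightarrow> real) \<Rightarrow> real" where
  "grad_inner \<Omega> p q = (\<Sum>i\<in>UNIV. L2inner \<Omega> (wpd \<Omega> p i) (wpd \<Omega> q i))"

definition vgrad_sqnorm :: "(real^'n) set \<Rightarrow> (real^'n \<Rightarrow> real^'n) \<Rightarrow> real" where
  "vgrad_sqnorm \<Omega> u = (\<Sum>j\<in>UNIV. \<Sum>i\<in>UNIV. L2inner \<Omega> (vgrad \<Omega> u j i) (vgrad \<Omega> u j i))"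

lemma aI_eq: "aI \<Omega> \<mu> lam u \<phi> = 2 * \<mu> * strain_inner \<Omega> u \<phi> + lam * div_inner \<Omega> u \<phi>"
  unfolding aI_def strain_inner_def div_inner_def
  by (simp add: L2inner_scale_left sum_distrib_left)

lemma dI_eq: "dI \<Omega> \<kappa> \<xi> p q = (1 / \<kappa>) * grad_inner \<Omega> p q + \<xi> * L2inner \<Omega> p q"
  unfolding dI_def grad_inner_def
  by (simp only: L2inner_scale_left sum_distrib_left)

lemma strain_inner_self_nonneg: "0 \<le> strain_inner \<Omega> u u"
  unfolding strain_inner_def by (intro sum_nonneg L2inner_self_nonneg)

lemma div_inner_self_nonneg: "0 \<le> div_inner \<Omega> u u"
  unfolding div_inner_def by (rule L2inner_self_nonneg)

lemma grad_inner_self_nonneg: "0 \<le> grad_inner \<Omega> p p"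
  unfolding grad_inner_def by (intro sum_nonneg L2inner_self_nonneg)

lemma aI_self_nonneg: "0 \<le> \<mu> \<Longrightarrow> 0 \<le> lam \<Longrightarrow> 0 \<le> aI \<Omega> \<mu> lam u u"
  unfolding aI_eq using strain_inner_self_nonneg[of \<Omega> u] div_inner_self_nonneg[of \<Omega> u] by simp

lemma dI_self_nonneg: "0 < \<kappa> \<Longrightarrow> 0 \<le> \<xi> \<Longrightarrow> 0 \<le> dI \<Omega> \<kappa> \<xi> p p"
  unfolding dI_eq using grad_inner_self_nonneg[of \<Omega> p] L2inner_self_nonneg[of \<Omega> p] by simp

lemma strain_inner_weighted_amgm:
  assumes "H1v \<Omega> u" "H1v \<Omega> \<phi>" "t > 0"
  shows "\<bar>strain_inner \<Omega> u \<phi>\<bar> \<le> (t * strain_inner \<Omega> u u + strain_inner \<Omega> \<phi> \<phi> / t) / 2"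
  unfolding strain_inner_def by (intro sum_weighted_amgm L2inner_weighted_amgm L2_strain assms)

lemma div_inner_weighted_amgm:
  assumes "H1v \<Omega> u" "H1v \<Omega> \<phi>" "t > 0"
  shows "\<bar>div_inner \<Omega> u \<phi>\<bar> \<le> (t * div_inner \<Omega> u u + div_inner \<Omega> \<phi> \<phi> / t) / 2"
  unfolding div_inner_def by (intro L2inner_weighted_amgm L2_wdiv assms)

lemma grad_inner_weighted_amgm:
  assumes "H1 \<Omega> p" "H1 \<Omega> q" "t > 0"
  shows "\<bar>grad_inner \<Omega> p q\<bar> \<le> (t * grad_inner \<Omega> p p + grad_inner \<Omega> q q / t) / 2"
  unfolding grad_inner_def by (intro sum_weighted_amgm L2inner_weighted_amgm L2_wpd assms)

lemma div_inner_le_strain_inner: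
  fixes u :: "real^'n \<Rightarrow> real^'n"
  assumes "H1v \<Omega> u"
  shows "div_inner \<Omega> u u \<le> real CARD('n) * strain_inner \<Omega> u u"
proof -
  have "div_inner \<Omega> u u \<le> real CARD('n) * (\<Sum>j\<in>UNIV. L2inner \<Omega> (strain \<Omega> u j j) (strain \<Omega> u j j))"
    unfolding div_inner_def wdiv_def strain_diag
    by (rule L2inner_sum_self_le) (auto intro: L2_vgrad assms)
  also have "(\<Sum>j\<in>UNIV. L2inner \<Omega> (strain \<Omega> u j j) (strain \<Omega> u j j)) \<le> strain_inner \<Omega> u u"
    unfolding strain_inner_def
    by (intro sum_mono member_le_sum) (auto intro: L2inner_self_nonneg)
  finally show ?thesis by (simp add: mult_left_mono)
qed

lemma strain_inner_le_vgrad_sqnorm: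
  assumes "H1v \<Omega> u"
  shows "strain_inner \<Omega> u u \<le> vgrad_sqnorm \<Omega> u"
proof -
  have entry: "L2inner \<Omega> (strain \<Omega> u j i) (strain \<Omega> u j i) \<le>
      (L2inner \<Omega> (vgrad \<Omega> u j i) (vgrad \<Omega> u j i) + L2inner \<Omega> (vgrad \<Omega> u i j) (vgrad \<Omega> u i j)) / 2"
    for j i
  proof -
    let ?a = "vgrad \<Omega> u j i" and ?b = "vgrad \<Omega> u i j"
    have a: "L2 \<Omega> ?a" and b: "L2 \<Omega> ?b" using L2_vgrad[OF assms] by auto
    have "L2inner \<Omega> (strain \<Omega> u j i) (strain \<Omega> u j i) =
        (L2inner \<Omega> ?a ?a + 2 * L2inner \<Omega> ?a ?b + L2inner \<Omega> ?b ?b) / 4"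
      unfolding strain_eq L2inner_scale_left L2inner_scale_right
        L2inner_add_left[OF a b L2_add[OF a b]] L2inner_add_right[OF a b a] L2inner_add_right[OF a b b]
      by (simp add: L2inner_commute[of \<Omega> ?b ?a])
    moreover have "L2inner \<Omega> ?a ?b \<le> (L2inner \<Omega> ?a ?a + L2inner \<Omega> ?b ?b) / 2"
      using abs_le_D1[OF L2inner_weighted_amgm[OF a b, of 1]] by simp
    ultimately show ?thesis by simp
  qed
  have "strain_inner \<Omega> u u \<le> (\<Sum>j\<in>UNIV. \<Sum>i\<in>UNIV.
      (L2inner \<Omega> (vgrad \<Omega> u j i) (vgrad \<Omega> u j i) + L2inner \<Omega> (vgrad \<Omega> u i j) (vgrad \<Omega> u i j)) / 2)"
    unfolding strain_inner_def by (intro sum_mono entry)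
  also have "\<dots> = (vgrad_sqnorm \<Omega> u +
      (\<Sum>j\<in>UNIV. \<Sum>i\<in>UNIV. L2inner \<Omega> (vgrad \<Omega> u i j) (vgrad \<Omega> u i j))) / 2"
    unfolding vgrad_sqnorm_def by (simp add: sum.distrib sum_divide_distrib[symmetric] add_divide_distrib)
  also have "(\<Sum>j\<in>UNIV. \<Sum>i\<in>UNIV. L2inner \<Omega> (vgrad \<Omega> u i j) (vgrad \<Omega> u i j)) = vgrad_sqnorm \<Omega> u"
    unfolding vgrad_sqnorm_def by (rule sum.swap)
  finally show ?thesis by simp
qed

lemma vgrad_sqnorm_le_H1vnorm: "vgrad_sqnorm \<Omega> u \<le> (H1vnorm \<Omega> u)^2"
proof -
  have "(H1norm \<Omega> f)^2 = (L2norm \<Omega> f)^2 + (\<Sum>i\<in>UNIV. (L2norm \<Omega> (wpd \<Omega> f i))^2)" for f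
    unfolding H1norm_def by (simp add: sum_nonneg)
  then have "(\<Sum>i\<in>UNIV. L2inner \<Omega> (vgrad \<Omega> u j i) (vgrad \<Omega> u j i)) \<le> (H1norm \<Omega> (\<lambda>x. u x $ j))^2" for j
    unfolding vgrad_def L2norm_power2 by (simp add: L2inner_self_nonneg)
  then have "vgrad_sqnorm \<Omega> u \<le> (\<Sum>j\<in>UNIV. (H1norm \<Omega> (\<lambda>x. u x $ j))^2)"
    unfolding vgrad_sqnorm_def by (rule sum_mono)
  also have "\<dots> = (H1vnorm \<Omega> u)^2"
    unfolding H1vnorm_def by (simp add: sum_nonneg)
  finally show ?thesis .
qed

lemma aI_le_H1vnorm:
  fixes w :: "real^'n \<Rightarrow> real^'n"
  assumes "H1v \<Omega> w" "0 < \<mu>" "0 < lam"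
  shows "aI \<Omega> \<mu> lam w w \<le> (2 + real CARD('n)) * max \<mu> lam * (H1vnorm \<Omega> w)^2"
proof -
  have S: "strain_inner \<Omega> w w \<le> (H1vnorm \<Omega> w)^2"
    using strain_inner_le_vgrad_sqnorm[OF assms(1)] vgrad_sqnorm_le_H1vnorm[of \<Omega> w] by linarith
  have D: "div_inner \<Omega> w w \<le> real CARD('n) * (H1vnorm \<Omega> w)^2"
    using div_inner_le_strain_inner[OF assms(1)] S by (meson mult_left_mono of_nat_0_le_iff order_trans)
  have "2 * \<mu> * strain_inner \<Omega> w w \<le> 2 * max \<mu> lam * (H1vnorm \<Omega> w)^2"
    using S strain_inner_self_nonneg[of \<Omega> w] assms(2) by (intro mult_mono) auto
  moreover have "lam * div_inner \<Omega> w w \<le> max \<mu> lam * (real CARD('n) * (H1vnorm \<Omega> w)^2)"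
    using D div_inner_self_nonneg[of \<Omega> w] assms(3) by (intro mult_mono) auto
  ultimately show ?thesis
    unfolding aI_eq by (simp add: algebra_simps)
qed

lemma max_mult_div_inner_le_aI:
  fixes \<phi> :: "real^'n \<Rightarrow> real^'n"
  assumes "H1v \<Omega> \<phi>" "\<mu> > 0" "lam > 0"
  shows "max \<mu> lam * div_inner \<Omega> \<phi> \<phi> \<le> real CARD('n) * aI \<Omega> \<mu> lam \<phi> \<phi>"
proof -
  have S: "0 \<le> strain_inner \<Omega> \<phi> \<phi>" and D: "0 \<le> div_inner \<Omega> \<phi> \<phi>"
    by (rule strain_inner_self_nonneg, rule div_inner_self_nonneg)
  have DS: "div_inner \<Omega> \<phi> \<phi> \<le> real CARD('n) * strain_inner \<Omega> \<phi> \<phi>"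
    by (rule div_inner_le_strain_inner[OF assms(1)])
  have n: "real CARD('n) \<ge> 1" by simp
  show ?thesis
  proof (cases "\<mu> \<le> lam")
    case True
    have "lam * div_inner \<Omega> \<phi> \<phi> \<le> aI \<Omega> \<mu> lam \<phi> \<phi>"
      unfolding aI_eq using S assms by simp
    also have "\<dots> \<le> real CARD('n) * aI \<Omega> \<mu> lam \<phi> \<phi>"
      using n aI_self_nonneg[of \<mu> lam \<Omega> \<phi>] assms by (simp add: mult_le_cancel_right1)
    finally show ?thesis using True by (simp add: max_def)
  next
    case False
    have "\<mu> * div_inner \<Omega> \<phi> \<phi> \<le> real CARD('n) * (\<mu> * strain_inner \<Omega> \<phi> \<phi>)"
      using mult_left_mono[OF DS, of \<mu>] assms by (simp add: ac_simps)
    also have "\<dots> \<le> real CARD('n) * aI \<Omega> \<mu> lam \<phi> \<phi>"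
    proof (intro mult_left_mono)
      have "0 \<le> \<mu> * strain_inner \<Omega> \<phi> \<phi>" "0 \<le> lam * div_inner \<Omega> \<phi> \<phi>"
        using S D assms by simp_all
      then show "\<mu> * strain_inner \<Omega> \<phi> \<phi> \<le> aI \<Omega> \<mu> lam \<phi> \<phi>"
        unfolding aI_eq by linarith
    qed simp
    finally show ?thesis using False by (simp add: max_def)
  qed
qed

lemma aI_weighted_amgm:
  assumes "H1v \<Omega> u" "H1v \<Omega> \<phi>" "0 \<le> \<mu>" "0 \<le> lam" "t > 0"
  shows "\<bar>aI \<Omega> \<mu> lam u \<phi>\<bar> \<le> (t * aI \<Omega> \<mu> lam u u + aI \<Omega> \<mu> lam \<phi> \<phi> / t) / 2"
proof -
  have "\<bar>aI \<Omega> \<mu> lam u \<phi>\<bar> \<le> 2 * \<mu> * \<bar>strain_inner \<Omega> u \<phi>\<bar> + lam * \<bar>div_inner \<Omega> u \<phi>\<bar>"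
    unfolding aI_eq using assms(3,4) by (simp add: abs_mult abs_triangle_ineq[THEN order_trans])
  also have "\<dots> \<le> 2 * \<mu> * ((t * strain_inner \<Omega> u u + strain_inner \<Omega> \<phi> \<phi> / t) / 2) +
                   lam * ((t * div_inner \<Omega> u u + div_inner \<Omega> \<phi> \<phi> / t) / 2)"
    using strain_inner_weighted_amgm[OF assms(1,2,5)] div_inner_weighted_amgm[OF assms(1,2,5)] assms(3,4)
    by (intro add_mono mult_left_mono) auto
  also have "\<dots> = (t * aI \<Omega> \<mu> lam u u + aI \<Omega> \<mu> lam \<phi> \<phi> / t) / 2"
    unfolding aI_eq using assms(5) by (simp add: field_simps)
  finally show ?thesis .
qed

lemma dI_weighted_amgm:
  assumes "H1 \<Omega> p" "H1 \<Omega> q" "0 < \<kappa>" "0 \<le> \<xi>" "t > 0"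
  shows "\<bar>dI \<Omega> \<kappa> \<xi> p q\<bar> \<le> (t * dI \<Omega> \<kappa> \<xi> p p + dI \<Omega> \<kappa> \<xi> q q / t) / 2"
proof -
  have "\<bar>dI \<Omega> \<kappa> \<xi> p q\<bar> \<le> (1 / \<kappa>) * \<bar>grad_inner \<Omega> p q\<bar> + \<xi> * \<bar>L2inner \<Omega> p q\<bar>"
    unfolding dI_eq using assms(3,4) by (simp add: abs_mult abs_triangle_ineq[THEN order_trans])
  also have "\<dots> \<le> (1 / \<kappa>) * ((t * grad_inner \<Omega> p p + grad_inner \<Omega> q q / t) / 2) +
                   \<xi> * ((t * L2inner \<Omega> p p + L2inner \<Omega> q q / t) / 2)"
    using grad_inner_weighted_amgm[OF assms(1,2,5)]
      L2inner_weighted_amgm[OF H1_imp_L2[OF assms(1)] H1_imp_L2[OF assms(2)] assms(5)] assms(3,4)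
    by (intro add_mono mult_left_mono) auto
  also have "\<dots> = (t * dI \<Omega> \<kappa> \<xi> p p + dI \<Omega> \<kappa> \<xi> q q / t) / 2"
    unfolding dI_eq using assms(3,5) by (simp add: field_simps)
  finally show ?thesis .
qed

lemma bI_weighted_amgm:
  fixes \<phi> :: "real^'n \<Rightarrow> real^'n"
  assumes "H1v \<Omega> \<phi>" "L2 \<Omega> p" "\<mu> > 0" "lam > 0" "t > 0"
  shows "\<bar>bI \<Omega> \<phi> p\<bar> \<le> (t * (real CARD('n) * aI \<Omega> \<mu> lam \<phi> \<phi>) + (L2inner \<Omega> p p / max \<mu> lam) / t) / 2"
proof -
  define \<beta> where "\<beta> = max \<mu> lam"
  have \<beta>: "\<beta> > 0" using assms by (simp add: \<beta>_def)
  have "\<bar>bI \<Omega> \<phi> p\<bar> \<le> ((t * \<beta>) * div_inner \<Omega> \<phi> \<phi> + L2inner \<Omega> p p / (t * \<beta>)) / 2"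
    unfolding bI_def div_inner_def using \<beta> assms(5) by (intro L2inner_weighted_amgm L2_wdiv assms) simp
  also have "(t * \<beta>) * div_inner \<Omega> \<phi> \<phi> \<le> t * (real CARD('n) * aI \<Omega> \<mu> lam \<phi> \<phi>)"
    using max_mult_div_inner_le_aI[OF assms(1,3,4)] assms(5) unfolding \<beta>_def
    by (simp add: mult.assoc mult_left_mono)
  finally show ?thesis unfolding \<beta>_def by (simp add: mult.commute)
qed

lemma prod_normI_power2:
  assumes "0 < \<mu>" "0 < lam" "0 < \<kappa>" "0 \<le> \<xi>"
  shows "(prod_normI \<Omega> \<mu> lam \<kappa> \<xi> (u, p))^2 =
    aI \<Omega> \<mu> lam u u + L2inner \<Omega> p p / max \<mu> lam + dI \<Omega> \<kappa> \<xi> p p"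
proof -
  have "0 \<le> aI \<Omega> \<mu> lam u u + L2inner \<Omega> p p / max \<mu> lam + dI \<Omega> \<kappa> \<xi> p p"
    using aI_self_nonneg[of \<mu> lam] dI_self_nonneg[of \<kappa> \<xi>] L2inner_self_nonneg assms
    by (intro add_nonneg_nonneg divide_nonneg_pos) auto
  then show ?thesis unfolding prod_normI_def L2norm_power2 by simp
qed

lemma abs_aI_le:
  assumes "H1v \<Omega> u" "H1v \<Omega> w" "0 \<le> \<mu>" "0 \<le> lam"
  shows "\<bar>aI \<Omega> \<mu> lam u w\<bar> \<le> sqrt (aI \<Omega> \<mu> lam u u) * sqrt (aI \<Omega> \<mu> lam w w)"
  using assms by (intro le_sqrt_mult_sqrt_if_weighted_amgm aI_weighted_amgm aI_self_nonneg)

lemma dI_commute: "dI \<Omega> \<kappa> \<xi> p q = dI \<Omega> \<kappa> \<xi> q p"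
  unfolding dI_eq grad_inner_def by (simp add: L2inner_commute)

lemma dI_scale_right:
  fixes \<Omega> :: "(real^'n) set"
  assumes "open \<Omega>" "bounded \<Omega>" "H1 \<Omega> p" "H1 \<Omega> q" "H1 \<Omega> (\<lambda>x. c * q x)"
  shows "dI \<Omega> \<kappa> \<xi> p (\<lambda>x. c * q x) = c * dI \<Omega> \<kappa> \<xi> p q"
proof -
  have "L2inner \<Omega> (wpd \<Omega> p i) (wpd \<Omega> (\<lambda>x. c * q x) i) = L2inner \<Omega> (wpd \<Omega> p i) (\<lambda>x. c * wpd \<Omega> q i x)" for i
    using assms by (intro L2inner_cong_AE_right L2_wpd L2_scale wpd_scale_AE)
  then show ?thesis
    unfolding dI_eq grad_inner_def by (simp add: L2inner_scale_right sum_distrib_left algebra_simps)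
qed

lemma dI_scale_left:
  fixes \<Omega> :: "(real^'n) set"
  assumes "open \<Omega>" "bounded \<Omega>" "H1 \<Omega> p" "H1 \<Omega> q" "H1 \<Omega> (\<lambda>x. c * p x)"
  shows "dI \<Omega> \<kappa> \<xi> (\<lambda>x. c * p x) q = c * dI \<Omega> \<kappa> \<xi> p q"
  using dI_scale_right[OF assms(1,2,4,3,5)] by (simp add: dI_commute)

lemma bI_scale_right: "bI \<Omega> u (\<lambda>x. c * p x) = c * bI \<Omega> u p"
  unfolding bI_def by (rule L2inner_scale_right)

lemma LI_neg_pressure:
  fixes \<Omega> :: "(real^'n) set"
  assumes "open \<Omega>" "bounded \<Omega>" "H1 \<Omega> p" "H1 \<Omega> (\<lambda>x. -1 * p x)"
  shows "LI \<Omega> \<mu> lam \<kappa> \<xi> (u, p) (u, \<lambda>x. -1 * p x) = aI \<Omega> \<mu> lam u u + dI \<Omega> \<kappa> \<xi> p p"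
    and "prod_normI \<Omega> \<mu> lam \<kappa> \<xi> (u, \<lambda>x. -1 * p x) = prod_normI \<Omega> \<mu> lam \<kappa> \<xi> (u, p)"
proof -
  have d: "dI \<Omega> \<kappa> \<xi> p (\<lambda>x. -1 * p x) = - dI \<Omega> \<kappa> \<xi> p p"
    using dI_scale_right[OF assms(1-3) assms(3-4)] by simp
  then show "LI \<Omega> \<mu> lam \<kappa> \<xi> (u, p) (u, \<lambda>x. -1 * p x) = aI \<Omega> \<mu> lam u u + dI \<Omega> \<kappa> \<xi> p p"
    unfolding LI_def using bI_scale_right[of \<Omega> u "-1" p] by simp
  have "dI \<Omega> \<kappa> \<xi> (\<lambda>x. -1 * p x) (\<lambda>x. -1 * p x) = dI \<Omega> \<kappa> \<xi> p p"
    using dI_scale_left[OF assms(1,2,3,4,4)] d by simp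
  then show "prod_normI \<Omega> \<mu> lam \<kappa> \<xi> (u, \<lambda>x. -1 * p x) = prod_normI \<Omega> \<mu> lam \<kappa> \<xi> (u, p)"
    unfolding prod_normI_def L2norm_def
    using L2inner_scale_left[of \<Omega> "-1" p] L2inner_scale_right[of \<Omega> "\<lambda>x. -1 * p x" "-1" p] by simp
qed

lemma LI_zero_pressure:
  fixes \<Omega> :: "(real^'n) set"
  assumes "open \<Omega>" "bounded \<Omega>" "H1 \<Omega> p" "H1 \<Omega> (\<lambda>x. 0)"
  shows "LI \<Omega> \<mu> lam \<kappa> \<xi> (u, p) (w, \<lambda>x. 0) = aI \<Omega> \<mu> lam u w + bI \<Omega> w p"
    and "prod_normI \<Omega> \<mu> lam \<kappa> \<xi> (w, \<lambda>x. 0) = sqrt (aI \<Omega> \<mu> lam w w)"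
proof -
  have d: "dI \<Omega> \<kappa> \<xi> p (\<lambda>x. 0) = 0"
    using dI_scale_right[of \<Omega> p p 0] assms by simp
  then show "LI \<Omega> \<mu> lam \<kappa> \<xi> (u, p) (w, \<lambda>x. 0) = aI \<Omega> \<mu> lam u w + bI \<Omega> w p"
    unfolding LI_def using bI_scale_right[of \<Omega> u 0 p] by simp
  have "dI \<Omega> \<kappa> \<xi> (\<lambda>x. 0) (\<lambda>x. 0) = 0"
    using dI_scale_left[of \<Omega> p "\<lambda>x. 0" 0] assms d by simp
  then show "prod_normI \<Omega> \<mu> lam \<kappa> \<xi> (w, \<lambda>x. 0) = sqrt (aI \<Omega> \<mu> lam w w)"
    unfolding prod_normI_def L2norm_def by (simp add: L2inner_zero_right)
qed

section \<open>Boundedness and the inf-sup condition\<close>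

lemma LI_bounded:
  fixes u \<phi> :: "real^'n \<Rightarrow> real^'n"
  assumes "H1v \<Omega> u" "H1 \<Omega> p" "H1v \<Omega> \<phi>" "H1 \<Omega> q"
    and pos: "0 < \<mu>" "0 < lam" "0 < \<kappa>" "0 < \<xi>"
  shows "\<bar>LI \<Omega> \<mu> lam \<kappa> \<xi> (u, p) (\<phi>, q)\<bar> \<le>
    (real CARD('n) + 1) * prod_normI \<Omega> \<mu> lam \<kappa> \<xi> (u, p) * prod_normI \<Omega> \<mu> lam \<kappa> \<xi> (\<phi>, q)"
proof -
  define n where "n = real CARD('n)"
  define A1 A2 where "A1 = aI \<Omega> \<mu> lam u u" and "A2 = aI \<Omega> \<mu> lam \<phi> \<phi>"
  define P1 P2 where "P1 = L2inner \<Omega> p p / max \<mu> lam" and "P2 = L2inner \<Omega> q q / max \<mu> lam"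
  define D1 D2 where "D1 = dI \<Omega> \<kappa> \<xi> p p" and "D2 = dI \<Omega> \<kappa> \<xi> q q"
  have n: "n \<ge> 1" unfolding n_def by simp
  have nonneg: "0 \<le> A1" "0 \<le> A2" "0 \<le> P1" "0 \<le> P2" "0 \<le> D1" "0 \<le> D2"
    unfolding A1_def A2_def P1_def P2_def D1_def D2_def using pos
    by (auto intro!: aI_self_nonneg dI_self_nonneg divide_nonneg_pos L2inner_self_nonneg)
  have "\<bar>LI \<Omega> \<mu> lam \<kappa> \<xi> (u, p) (\<phi>, q)\<bar> / (n + 1) \<le> (t * (A1 + P1 + D1) + (A2 + P2 + D2) / t) / 2"
    if t: "t > 0" for t
  proof -
    have a: "\<bar>aI \<Omega> \<mu> lam u \<phi>\<bar> \<le> (t * A1 + A2 / t) / 2"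
      unfolding A1_def A2_def using aI_weighted_amgm[OF assms(1,3)] pos t by simp
    have b1: "\<bar>bI \<Omega> \<phi> p\<bar> \<le> (t * P1 + n * A2 / t) / 2"
      using bI_weighted_amgm[OF assms(3) H1_imp_L2[OF assms(2)] pos(1,2), of "1 / t"] t
      unfolding P1_def A2_def n_def by (simp add: field_simps)
    have b2: "\<bar>bI \<Omega> u q\<bar> \<le> (t * (n * A1) + P2 / t) / 2"
      unfolding P2_def A1_def n_def using bI_weighted_amgm[OF assms(1) H1_imp_L2[OF assms(4)] pos(1,2) t] .
    have d: "\<bar>dI \<Omega> \<kappa> \<xi> p q\<bar> \<le> (t * D1 + D2 / t) / 2"
      unfolding D1_def D2_def using dI_weighted_amgm[OF assms(2,4) pos(3)] pos(4) t by simp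
    have "\<bar>LI \<Omega> \<mu> lam \<kappa> \<xi> (u, p) (\<phi>, q)\<bar> \<le>
        \<bar>aI \<Omega> \<mu> lam u \<phi>\<bar> + \<bar>bI \<Omega> \<phi> p\<bar> + \<bar>bI \<Omega> u q\<bar> + \<bar>dI \<Omega> \<kappa> \<xi> p q\<bar>"
      unfolding LI_def by simp
    also have "\<dots> \<le> (t * ((n + 1) * A1 + P1 + D1) + ((n + 1) * A2 + P2 + D2) / t) / 2"
      using a b1 b2 d t by (simp add: field_simps)
    also have "\<dots> \<le> (t * ((n + 1) * (A1 + P1 + D1)) + ((n + 1) * (A2 + P2 + D2)) / t) / 2"
      using n nonneg t by (intro divide_right_mono add_mono mult_left_mono) (auto simp: algebra_simps)
    finally show ?thesis using n by (simp add: field_simps)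
  qed
  then have "\<bar>LI \<Omega> \<mu> lam \<kappa> \<xi> (u, p) (\<phi>, q)\<bar> / (n + 1) \<le> sqrt (A1 + P1 + D1) * sqrt (A2 + P2 + D2)"
    using nonneg by (intro le_sqrt_mult_sqrt_if_weighted_amgm) auto
  moreover have "sqrt (A1 + P1 + D1) = prod_normI \<Omega> \<mu> lam \<kappa> \<xi> (u, p)"
    and "sqrt (A2 + P2 + D2) = prod_normI \<Omega> \<mu> lam \<kappa> \<xi> (\<phi>, q)"
    unfolding prod_normI_def A1_def A2_def P1_def P2_def D1_def D2_def L2norm_power2 by simp_all
  ultimately show ?thesis using n unfolding n_def by (simp add: field_simps)
qed

lemma mem_kerI_perp_if_kerI_trivial:
  assumes HQ: "\<And>q. q \<in> Q \<Longrightarrow> H1 \<Omega> q" and ker: "\<forall>k\<in>kerI \<Omega> U Q. L2norm \<Omega> k = 0" and "p \<in> Q"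
  shows "p \<in> kerI_perp \<Omega> U Q"
  unfolding kerI_perp_def
proof (intro CollectI conjI ballI)
  fix k assume "k \<in> kerI \<Omega> U Q"
  then have "\<bar>L2inner \<Omega> p k\<bar> \<le> L2norm \<Omega> p * 0"
    using abs_L2inner_le[OF H1_imp_L2[OF HQ[OF \<open>p \<in> Q\<close>]] H1_imp_L2[OF HQ]] ker
    unfolding kerI_def by fastforce
  then show "L2inner \<Omega> p k = 0" by simp
qed (rule \<open>p \<in> Q\<close>)

lemma infsup_in_energy_norm:
  fixes U :: "(real^'n \<Rightarrow> real^'n) set"
  assumes HU: "\<And>u. u \<in> U \<Longrightarrow> H1v \<Omega> u" and L2: "L2 \<Omega> p" and pos: "0 < \<mu>" "0 < lam"
    and IS: "\<forall>p\<in>kerI_perp \<Omega> U Q. L2norm \<Omega> p > 0 \<longrightarrow>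
          (\<forall>t < \<gamma> * L2norm \<Omega> p. \<exists>u\<in>U. H1vnorm \<Omega> u > 0 \<and> bI \<Omega> u p > t * H1vnorm \<Omega> u)"
    and p: "p \<in> kerI_perp \<Omega> U Q" "L2norm \<Omega> p > 0"
    and t: "0 < t" "t * sqrt ((2 + real CARD('n)) * max \<mu> lam) < \<gamma> * L2norm \<Omega> p"
  shows "\<exists>w\<in>U. 0 < aI \<Omega> \<mu> lam w w \<and> t * sqrt (aI \<Omega> \<mu> lam w w) < bI \<Omega> w p"
proof -
  define K where "K = sqrt ((2 + real CARD('n)) * max \<mu> lam)"
  obtain w where w: "w \<in> U" "H1vnorm \<Omega> w > 0" "bI \<Omega> w p > t * K * H1vnorm \<Omega> w"
    using IS p t unfolding K_def by blast
  have Hw: "H1v \<Omega> w" using HU w(1) .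
  have "sqrt (aI \<Omega> \<mu> lam w w) \<le> sqrt ((2 + real CARD('n)) * max \<mu> lam * (H1vnorm \<Omega> w)^2)"
    using aI_le_H1vnorm[OF Hw pos] by simp
  also have "\<dots> = K * H1vnorm \<Omega> w"
    using w(2) unfolding K_def by (simp add: real_sqrt_mult)
  finally have "t * sqrt (aI \<Omega> \<mu> lam w w) < bI \<Omega> w p"
    using w(3) t(1) by (smt (verit) mult_left_mono mult.assoc)
  moreover have "0 < aI \<Omega> \<mu> lam w w"
  proof (rule ccontr)
    assume "\<not> 0 < aI \<Omega> \<mu> lam w w"
    then have "aI \<Omega> \<mu> lam w w = 0"
      using aI_self_nonneg[of \<mu> lam \<Omega> w] pos by linarith
    then have "max \<mu> lam * div_inner \<Omega> w w \<le> 0"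
      using max_mult_div_inner_le_aI[OF Hw pos] by simp
    then have "L2norm \<Omega> (wdiv \<Omega> w) = 0"
      using div_inner_self_nonneg[of \<Omega> w] pos
      unfolding L2norm_def div_inner_def by (simp add: mult_le_0_iff)
    then have "bI \<Omega> w p \<le> 0"
      using abs_L2inner_le[OF L2_wdiv[OF Hw] L2] unfolding bI_def by simp
    moreover have "0 < t * K * H1vnorm \<Omega> w"
      using t(1) w(2) pos unfolding K_def by simp
    ultimately show False using w(3) by linarith
  qed
  ultimately show ?thesis using w(1) by blast
qed

definition infsup_const :: "real \<Rightarrow> real" where
  "infsup_const c0 = min (1/2) (min (c0^2 / 32) (c0 / 8))"

lemma infsup_const_le: "infsup_const c \<le> 1/2" "infsup_const c \<le> c^2 / 32" "infsup_const c \<le> c / 8"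
  unfolding infsup_const_def by auto

lemma infsup_const_pressure_bounds:
  fixes A P D N c0 :: real
  assumes N: "N^2 = A + P + D" "0 < N" and nonneg: "0 \<le> A" "0 \<le> D" and "0 < c0"
    and small: "A + D < infsup_const c0 * N^2"
  shows "0 < P" "sqrt A \<le> c0 / 4 * sqrt P" "infsup_const c0 * N \<le> c0 / 4 * sqrt P"
proof -
  define c where "c = infsup_const c0"
  have "c * N^2 \<le> 1 / 2 * N^2"
    using infsup_const_le(1) unfolding c_def by (intro mult_right_mono) simp_all
  then have PN: "N^2 < 2 * P" "A < c * N^2"
    using N(1) nonneg small unfolding c_def by linarith+
  moreover have "0 < N^2" using N(2) by simp
  ultimately show P: "0 < P" by linarith
  have "A \<le> c0^2 / 32 * N^2"
    using PN(2) infsup_const_le(2)[of c0] mult_right_mono[of c "c0^2 / 32" "N^2"] unfolding c_def by simp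
  also have "\<dots> \<le> c0^2 / 32 * (2 * P)"
    using PN(1) by (intro mult_left_mono) simp_all
  also have "\<dots> = (c0 / 4)^2 * P"
    by (simp add: power_divide)
  finally have "sqrt A \<le> sqrt ((c0 / 4)^2 * P)"
    by (rule real_sqrt_le_mono)
  also have "\<dots> = c0 / 4 * sqrt P"
    using \<open>0 < c0\<close> by (simp add: real_sqrt_mult)
  finally show "sqrt A \<le> c0 / 4 * sqrt P" .
  have "(N / 2)^2 \<le> P"
    using PN(1) P by (simp add: power_divide)
  then have "N / 2 \<le> sqrt P"
    by (rule real_le_rsqrt)
  have "infsup_const c0 * N \<le> c0 / 8 * N"
    using infsup_const_le(3) N(2) by (intro mult_right_mono) simp_all
  also have "\<dots> = c0 / 4 * (N / 2)" by simp
  also have "\<dots> \<le> c0 / 4 * sqrt P"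
    using \<open>N / 2 \<le> sqrt P\<close> \<open>0 < c0\<close> by (intro mult_left_mono) simp_all
  finally show "infsup_const c0 * N \<le> c0 / 4 * sqrt P" .
qed

locale elasticity_infsup =
  fixes \<Omega> :: "(real^'n) set"
    and U :: "(real^'n \<Rightarrow> real^'n) set"
    and Q :: "(real^'n \<Rightarrow> real) set"
    and \<gamma> :: real
  assumes open_domain: "open \<Omega>" and bounded_domain: "bounded \<Omega>"
    and H1v_U: "\<And>u. u \<in> U \<Longrightarrow> H1v \<Omega> u"
    and H1_Q: "\<And>p. p \<in> Q \<Longrightarrow> H1 \<Omega> p"
    and scale_Q: "\<And>c p. p \<in> Q \<Longrightarrow> (\<lambda>x. c * p x) \<in> Q"
    and kerI_trivial: "\<forall>p\<in>kerI \<Omega> U Q. L2norm \<Omega> p = 0"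
    and infsup: "\<forall>p\<in>kerI_perp \<Omega> U Q. L2norm \<Omega> p > 0 \<longrightarrow>
          (\<forall>t < \<gamma> * L2norm \<Omega> p. \<exists>u\<in>U. H1vnorm \<Omega> u > 0 \<and> bI \<Omega> u p > t * H1vnorm \<Omega> u)"
    and \<gamma>_pos: "\<gamma> > 0"
begin

(* The inf-sup constant for the energy norm, by aI_le_H1vnorm. *)
definition c0 :: real where
  "c0 = \<gamma> / sqrt (2 + real CARD('n))"

lemma c0_pos: "c0 > 0"
  unfolding c0_def using \<gamma>_pos by simp

lemma energy_infsup:
  assumes "p \<in> Q" "0 < \<mu>" "0 < lam" "0 < L2inner \<Omega> p p"
  shows "\<exists>w\<in>U. 0 < aI \<Omega> \<mu> lam w w \<and>
           c0 / 2 * sqrt (L2inner \<Omega> p p / max \<mu> lam) * sqrt (aI \<Omega> \<mu> lam w w) < bI \<Omega> w p"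
proof (rule infsup_in_energy_norm[OF H1v_U H1_imp_L2[OF H1_Q[OF assms(1)]] assms(2,3) infsup])
  show "p \<in> kerI_perp \<Omega> U Q"
    using mem_kerI_perp_if_kerI_trivial[OF H1_Q kerI_trivial assms(1)] .
  show "0 < L2norm \<Omega> p" using assms(4) by (simp add: L2norm_def)
  show "0 < c0 / 2 * sqrt (L2inner \<Omega> p p / max \<mu> lam)"
    using c0_pos assms by simp
  have "c0 / 2 * sqrt (L2inner \<Omega> p p / max \<mu> lam) * sqrt ((2 + real CARD('n)) * max \<mu> lam)
      = \<gamma> / 2 * L2norm \<Omega> p"
    using assms(2,3) unfolding c0_def L2norm_def real_sqrt_mult real_sqrt_divide by simp
  also have "\<dots> < \<gamma> * L2norm \<Omega> p"
    using \<gamma>_pos assms(4) by (simp add: L2norm_def)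
  finally show "c0 / 2 * sqrt (L2inner \<Omega> p p / max \<mu> lam) * sqrt ((2 + real CARD('n)) * max \<mu> lam)
      < \<gamma> * L2norm \<Omega> p" .
qed

lemma LI_infsup_pressure_dominant:
  assumes up: "u \<in> U" "p \<in> Q" and pos: "0 < \<mu>" "0 < lam" "0 < \<kappa>" "0 < \<xi>"
    and N: "0 < prod_normI \<Omega> \<mu> lam \<kappa> \<xi> (u, p)"
    and small: "aI \<Omega> \<mu> lam u u + dI \<Omega> \<kappa> \<xi> p p < infsup_const c0 * (prod_normI \<Omega> \<mu> lam \<kappa> \<xi> (u, p))^2"
    and t: "t < infsup_const c0 * prod_normI \<Omega> \<mu> lam \<kappa> \<xi> (u, p)"
  shows "\<exists>\<phi>q\<in>U \<times> Q. 0 < prod_normI \<Omega> \<mu> lam \<kappa> \<xi> \<phi>q \<and>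
            t * prod_normI \<Omega> \<mu> lam \<kappa> \<xi> \<phi>q < LI \<Omega> \<mu> lam \<kappa> \<xi> (u, p) \<phi>q"
proof -
  define N where "N = prod_normI \<Omega> \<mu> lam \<kappa> \<xi> (u, p)"
  define A where "A = aI \<Omega> \<mu> lam u u"
  define P where "P = L2inner \<Omega> p p / max \<mu> lam"
  define D where "D = dI \<Omega> \<kappa> \<xi> p p"
  have Hu: "H1v \<Omega> u" and Hp: "H1 \<Omega> p" using up H1v_U H1_Q by auto
  have "0 \<le> A" "0 \<le> D"
    unfolding A_def D_def using pos by (auto intro: aI_self_nonneg dI_self_nonneg)
  moreover have "N^2 = A + P + D"
    unfolding N_def A_def P_def D_def using prod_normI_power2[OF pos(1-3) less_imp_le[OF pos(4)]] .
  ultimately have bounds: "0 < P" "sqrt A \<le> c0 / 4 * sqrt P" "infsup_const c0 * N \<le> c0 / 4 * sqrt P"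
    using infsup_const_pressure_bounds[of N A P D c0] N small c0_pos unfolding N_def A_def D_def by auto
  then have "0 < L2inner \<Omega> p p" using pos by (simp add: P_def zero_less_divide_iff)
  then obtain w where w: "w \<in> U" "0 < aI \<Omega> \<mu> lam w w"
      "c0 / 2 * sqrt P * sqrt (aI \<Omega> \<mu> lam w w) < bI \<Omega> w p"
    using energy_infsup[OF up(2) pos(1,2)] unfolding P_def by blast
  define W where "W = sqrt (aI \<Omega> \<mu> lam w w)"
  have W: "0 < W" using w(2) by (simp add: W_def)
  have "t < c0 / 4 * sqrt P"
    using t bounds(3) unfolding N_def by linarith
  then have "t * W < c0 / 4 * sqrt P * W"
    using W by simp
  also have "\<dots> \<le> aI \<Omega> \<mu> lam u w + bI \<Omega> w p"
  proof -
    have "\<bar>aI \<Omega> \<mu> lam u w\<bar> \<le> sqrt A * W"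
      unfolding A_def W_def using Hu H1v_U[OF w(1)] pos by (intro abs_aI_le) auto
    also have "\<dots> \<le> c0 / 4 * sqrt P * W"
      using bounds(2) W by simp
    finally show ?thesis using w(3) unfolding W_def by linarith
  qed
  also have "\<dots> = LI \<Omega> \<mu> lam \<kappa> \<xi> (u, p) (w, \<lambda>x. 0)"
    using LI_zero_pressure(1)[OF open_domain bounded_domain Hp] H1_Q scale_Q[OF up(2), of 0] by simp
  finally show ?thesis
    using LI_zero_pressure(2)[OF open_domain bounded_domain Hp] H1_Q scale_Q[OF up(2), of 0] W w(1)
    unfolding W_def by (intro bexI[of _ "(w, \<lambda>x. 0)"]) auto
qed

lemma LI_infsup:
  assumes up: "u \<in> U" "p \<in> Q" and pos: "0 < \<mu>" "0 < lam" "0 < \<kappa>" "0 < \<xi>"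
    and N: "0 < prod_normI \<Omega> \<mu> lam \<kappa> \<xi> (u, p)"
    and t: "t < infsup_const c0 * prod_normI \<Omega> \<mu> lam \<kappa> \<xi> (u, p)"
  shows "\<exists>\<phi>q\<in>U \<times> Q. 0 < prod_normI \<Omega> \<mu> lam \<kappa> \<xi> \<phi>q \<and>
            t * prod_normI \<Omega> \<mu> lam \<kappa> \<xi> \<phi>q < LI \<Omega> \<mu> lam \<kappa> \<xi> (u, p) \<phi>q"
proof (cases "infsup_const c0 * (prod_normI \<Omega> \<mu> lam \<kappa> \<xi> (u, p))^2 \<le>
                aI \<Omega> \<mu> lam u u + dI \<Omega> \<kappa> \<xi> p p")
  case True
  define N where "N = prod_normI \<Omega> \<mu> lam \<kappa> \<xi> (u, p)"
  have Hp: "H1 \<Omega> p" and Hnp: "H1 \<Omega> (\<lambda>x. -1 * p x)"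
    using H1_Q[OF up(2)] H1_Q[OF scale_Q[OF up(2)]] .
  note neg = LI_neg_pressure[OF open_domain bounded_domain Hp Hnp]
  have "t * N < infsup_const c0 * N * N"
    using t N unfolding N_def by (intro mult_strict_right_mono) auto
  also have "\<dots> \<le> aI \<Omega> \<mu> lam u u + dI \<Omega> \<kappa> \<xi> p p"
    using True unfolding N_def by (simp add: power2_eq_square mult.assoc)
  finally show ?thesis
    using neg N up(1) scale_Q[OF up(2), of "-1"] unfolding N_def
    by (intro bexI[of _ "(u, \<lambda>x. -1 * p x)"]) simp_all
next
  case False
  then show ?thesis using LI_infsup_pressure_dominant[OF up pos N _ t] by simp
qed

lemma well_posed:
  assumes "0 < \<mu>" "0 < lam" "0 < \<kappa>" "0 < \<xi>"
  shows "well_posed_with \<Omega> U Q \<mu> lam \<kappa> \<xi> (real CARD('n) + 1) (infsup_const c0)"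
  unfolding well_posed_with_def
proof (intro conjI ballI impI allI)
  fix up \<phi>q assume "up \<in> U \<times> Q" "\<phi>q \<in> U \<times> Q"
  then obtain u p \<phi> q where "up = (u, p)" "\<phi>q = (\<phi>, q)" "u \<in> U" "p \<in> Q" "\<phi> \<in> U" "q \<in> Q"
    by auto
  then show "\<bar>LI \<Omega> \<mu> lam \<kappa> \<xi> up \<phi>q\<bar> \<le>
      (real CARD('n) + 1) * prod_normI \<Omega> \<mu> lam \<kappa> \<xi> up * prod_normI \<Omega> \<mu> lam \<kappa> \<xi> \<phi>q"
    using LI_bounded[OF H1v_U H1_Q H1v_U H1_Q assms] by simp
next
  fix up t assume "up \<in> U \<times> Q" "0 < prod_normI \<Omega> \<mu> lam \<kappa> \<xi> up"
    "t < infsup_const c0 * prod_normI \<Omega> \<mu> lam \<kappa> \<xi> up"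
  then show "\<exists>\<phi>q\<in>U \<times> Q. 0 < prod_normI \<Omega> \<mu> lam \<kappa> \<xi> \<phi>q \<and>
      t * prod_normI \<Omega> \<mu> lam \<kappa> \<xi> \<phi>q < LI \<Omega> \<mu> lam \<kappa> \<xi> up \<phi>q"
    using LI_infsup assms by (cases up) auto
qed

end

lemma H1_if_H1_zero_on: "H1_zero_on \<Omega> \<Gamma> f \<Longrightarrow> H1 \<Omega> f"
  unfolding H1_zero_on_def by (rule conjunct1)

lemma elasticity_infsupI:
  assumes "lipschitz_domain \<Omega>"
    and "closed_subspace_v \<Omega> (H1_D \<Omega> \<Gamma>D) U" "closed_subspace_s \<Omega> (H1_P \<Omega> \<Gamma>N) Q"
    and "\<forall>p\<in>kerI \<Omega> U Q. L2norm \<Omega> p = 0"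
    and "\<forall>p\<in>kerI_perp \<Omega> U Q. L2norm \<Omega> p > 0 \<longrightarrow>
          (\<forall>t < \<gamma> * L2norm \<Omega> p. \<exists>u\<in>U. H1vnorm \<Omega> u > 0 \<and> bI \<Omega> u p > t * H1vnorm \<Omega> u)"
    and "\<gamma> > 0"
  shows "elasticity_infsup \<Omega> U Q \<gamma>"
proof
  show "open \<Omega>" "bounded \<Omega>" using assms(1) unfolding lipschitz_domain_def by auto
  have U: "U \<subseteq> H1_D \<Omega> \<Gamma>D"
    using assms(2) unfolding closed_subspace_v_def by (elim conjE)
  have Q: "Q \<subseteq> H1_P \<Omega> \<Gamma>N"
    using assms(3) unfolding closed_subspace_s_def by (elim conjE)
  have "\<forall>c. \<forall>p\<in>Q. (\<lambda>x. c * p x) \<in> Q"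
    using assms(3) unfolding closed_subspace_s_def by (elim conjE)
  then show "(\<lambda>x. c * p x) \<in> Q" if "p \<in> Q" for c p
    using that by blast
  show "H1v \<Omega> u" if "u \<in> U" for u
  proof -
    have "\<forall>j. H1_zero_on \<Omega> \<Gamma>D (\<lambda>x. u x $ j)"
      using subsetD[OF U that] unfolding H1_D_def by (rule CollectD)
    then show ?thesis
      unfolding H1v_def by (intro allI H1_if_H1_zero_on) (rule spec)
  qed
  show "H1 \<Omega> p" if "p \<in> Q" for p
    using H1_if_H1_zero_on[of \<Omega> \<Gamma>N p] subsetD[OF Q that] unfolding H1_P_def by simp
qed (fact assms(4-6))+

(* The dimension, simple connectivity and boundary hypotheses are what the paper needs to
   establish the inf-sup condition; here that condition is assumed. *)
theorem theorem4:
  fixes \<Omega> :: "(real^'n) set"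
    and \<Gamma>Du \<Gamma>Nu \<Gamma>Dv \<Gamma>Nv :: "(real^'n) set"
    and \<gamma> :: real
  assumes dim: "CARD('n) = 2 \<or> CARD('n) = 3"
    and dom: "lipschitz_domain \<Omega>" "simply_connected \<Omega>"
    and bdu: "\<Gamma>Du \<subseteq> frontier \<Omega>" "\<Gamma>Nu \<subseteq> frontier \<Omega>"
             "frontier \<Omega> = closure \<Gamma>Du \<union> closure \<Gamma>Nu" "\<Gamma>Du \<inter> \<Gamma>Nu = {}"
    and bdv: "\<Gamma>Dv \<subseteq> frontier \<Omega>" "\<Gamma>Nv \<subseteq> frontier \<Omega>"
             "frontier \<Omega> = closure \<Gamma>Dv \<union> closure \<Gamma>Nv" "\<Gamma>Dv \<inter> \<Gamma>Nv = {}"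
    and \<gamma>pos: "\<gamma> > 0"
  shows "\<exists>C c. C > 0 \<and> c > 0 \<and>
    (\<forall>U Q.
       closed_subspace_v \<Omega> (H1_D \<Omega> \<Gamma>Du) U \<longrightarrow>
       closed_subspace_s \<Omega> (H1_P \<Omega> \<Gamma>Nv) Q \<longrightarrow>
       (\<forall>p\<in>kerI \<Omega> U Q. L2norm \<Omega> p = 0) \<longrightarrow>
       (\<forall>p\<in>kerI_perp \<Omega> U Q. L2norm \<Omega> p > 0 \<longrightarrow>
          (\<forall>t < \<gamma> * L2norm \<Omega> p. \<exists>u\<in>U. H1vnorm \<Omega> u > 0 \<and> bI \<Omega> u p > t * H1vnorm \<Omega> u)) \<longrightarrow>
       (\<forall>\<mu> lam \<kappa> \<xi>. \<mu> > 0 \<longrightarrow> lam > 0 \<longrightarrow> \<kappa> > 0 \<longrightarrow> \<xi> > 0 \<longrightarrow>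
          well_posed_with \<Omega> U Q \<mu> lam \<kappa> \<xi> C c))"
proof (rule exI[of _ "real CARD('n) + 1"], rule exI[of _ "infsup_const (\<gamma> / sqrt (2 + real CARD('n)))"],
    intro conjI allI impI, goal_cases)
  case 2
  show ?case using \<gamma>pos by (simp add: infsup_const_def)
next
  case (3 U Q \<mu> lam \<kappa> \<xi>)
  interpret elasticity_infsup \<Omega> U Q \<gamma>
    by (rule elasticity_infsupI[OF dom(1) 3(1-4) \<gamma>pos])
  show ?case
    using well_posed[OF 3(5-8)] unfolding c0_def .
qed simp

end
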